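(* Let $n\ge 1$ and $k\ge 1$ be integers with $n\ge 2k-1$. Then $$\mathit{GenF}(n,k)=\{0^i1(01)^{k-1}0^{n-2k+1-i}\ :\ 0\le i\le n-2k+1\}.$$ In particular $|\mathit{GenF}(n,k)|=n-2k+2$.
   Context: The weight of a binary word is its number of 1's. $F_n(2,k)$ is the set of binary words of length $n$ and weight $k$ containing no two consecutive 1's. A homogeneous transposition of a binary word exchanges a 1 and a 0 such that no 1 occurs strictly between the two exchanged positions. For a set $S$ of binary words of the same length and weight and $\alpha\in S$, the list obtained by applying the greedy algorithm for $S$ to $\alpha$ is built as follows: start with the list $(\alpha)$; repeatedly, for the last word $w$ of the current list, among all words obtainable from $w$ by one homogeneous transposition that lie in $S$ and do not already occur in the list, choose the one obtained by transposing the leftmost possible 1 with (among transpositions of that 1) the leftmost possible 0, and append it; stop when no such word exists. $\mathcal{F}(\alpha)$ denotes the list obtained by applying the greedy algorithm for $F_n(2,k)$ to $\alpha\in F_n(2,k)$, and $\mathit{GenF}(n,k)$ is the set of $\alpha\in F_n(2,k)$ such that $\mathcal{F}(\alpha)$ contains every word of $F_n(2,k)$. *)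

theory Defs
  imports Main
begin

definition weight :: "nat list \<Rightarrow> nat" where
  "weight w = length (filter (\<lambda>x. x = 1) w)"

definition Fib_words :: "nat \<Rightarrow> nat \<Rightarrow> nat list set" where
  "Fib_words n k = {w. length w = n \<and> set w \<subseteq> {0,1} \<and> weight w = k \<and>
      (\<forall>i. Suc i < n \<longrightarrow> \<not> (w ! i = 1 \<and> w ! Suc i = 1))}"

definition swap_pos :: "nat list \<Rightarrow> nat \<Rightarrow> nat \<Rightarrow> nat list" where
  "swap_pos w p q = w[p := w ! q, q := w ! p]"

definition htrans :: "nat list \<Rightarrow> nat \<Rightarrow> nat \<Rightarrow> bool" where
  "htrans w p q \<longleftrightarrow> p < length w \<and> q < length w \<and> w ! p = 1 \<and> w ! q = 0 \<and>
      (\<forall>j. min p q < j \<and> j < max p q \<longrightarrow> w ! j \<noteq> 1)"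

definition cands :: "nat list set \<Rightarrow> nat list list \<Rightarrow> (nat \<times> nat) set" where
  "cands S L = {(p,q). htrans (last L) p q \<and> swap_pos (last L) p q \<in> S
                       \<and> swap_pos (last L) p q \<notin> set L}"

definition greedy_step :: "nat list set \<Rightarrow> nat list list \<Rightarrow> nat list list" where
  "greedy_step S L =
     (if cands S L = {} then L
      else (let p = (LEAST p. \<exists>q. (p,q) \<in> cands S L);
                q = (LEAST q. (p,q) \<in> cands S L)
            in L @ [swap_pos (last L) p q]))"

text \<open>Each effective step appends a new word of S, so after card S iterations
  the process has stopped (for finite S and \<alpha> \<in> S).\<close>
definition greedy :: "nat list set \<Rightarrow> nat list \<Rightarrow> nat list list" where
  "greedy S \<alpha> = (greedy_step S ^^ card S) [\<alpha>]"

definition GenF :: "nat \<Rightarrow> nat \<Rightarrow> nat list set" where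
  "GenF n k = {\<alpha> \<in> Fib_words n k. Fib_words n k \<subseteq> set (greedy (Fib_words n k) \<alpha>)}"

end

theory Submission
  imports Defs
begin

text \<open>Append a 0 to every word; this does not affect the greedy lists. The words of weight
  \<open>\<kappa> + 1\<close> then fall into slices according to the position \<open>2\<kappa> + c\<close> of their last 1, and slice
  \<open>c\<close> is a copy of the words of weight \<open>\<kappa>\<close> and length \<open>2\<kappa> + c\<close> followed by \<open>10\<dots>0\<close>. Inside a
  slice the greedy algorithm replays the greedy algorithm for the shorter words, because the
  last 1 blocks every move into the tail; once the slice is exhausted only the last 1 can move,
  and it jumps to the leftmost slice not yet visited. By induction on the weight one follows
  the greedy list: started at a word \<open>0\<^sup>i 1 (01)\<^sup>\<kappa> 0\<dots>0\<close> it visits every slice completely and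
  ends at one of these words, determined by the parity of \<open>\<kappa>\<close>; started at any other word it
  never reaches \<open>1 (01)\<^sup>\<kappa> 0\<dots>0\<close>.\<close>

section \<open>Words as sets of positions\<close>

definition word_of_set :: "nat \<Rightarrow> nat set \<Rightarrow> nat list" where
  "word_of_set m A = map (\<lambda>i. if i \<in> A then 1 else 0) [0..<m]"

lemma length_word_of_set[simp]: "length (word_of_set m A) = m"
  by (simp add: word_of_set_def)

lemma nth_word_of_set[simp]: "i < m \<Longrightarrow> word_of_set m A ! i = (if i \<in> A then 1 else 0)"
  by (simp add: word_of_set_def)

lemma word_of_set_eq_iff:
  assumes "A \<subseteq> {..<m}" "B \<subseteq> {..<m}"
  shows "word_of_set m A = word_of_set m B \<longleftrightarrow> A = B"
proof
  assume eq: "word_of_set m A = word_of_set m B"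
  have "x \<in> A \<longleftrightarrow> x \<in> B" if "x < m" for x
    using arg_cong[OF eq, of "\<lambda>w. w ! x"] that by (auto split: if_splits)
  then show "A = B" using assms by blast
qed simp

lemma word_of_set_cong: "A \<inter> {..<m} = B \<inter> {..<m} \<Longrightarrow> word_of_set m A = word_of_set m B"
  unfolding word_of_set_def by (rule map_cong) auto

lemma take_word_of_set: "l \<le> m \<Longrightarrow> take l (word_of_set m A) = word_of_set l A"
  unfolding word_of_set_def by (simp add: take_map)

lemma word_of_set_snoc0: "A \<subseteq> {..<n} \<Longrightarrow> word_of_set n A @ [0] = word_of_set (Suc n) A"
  by (rule nth_equalityI) (auto simp: nth_append nth_Cons split: nat.splits)

lemma word_of_set_append_tail:
  "B \<subseteq> {..<l} \<Longrightarrow> l < m \<Longrightarrow> word_of_set l B @ word_of_set (m - l) {0} = word_of_set m (insert l B)"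
  by (rule nth_equalityI) (auto simp: nth_append)

lemma word_of_set_split_tail:
  assumes A: "A \<subseteq> {..<m}" and l: "l < m" and lv: "length v = l"
    and eq: "word_of_set m A = v @ word_of_set (m - l) {0}"
  shows "A = insert l (A \<inter> {..<l})" and "v = word_of_set l (A \<inter> {..<l})"
proof -
  have "v = take l (word_of_set m A)" using eq lv by simp
  also have "\<dots> = word_of_set l A" using l by (simp add: take_word_of_set)
  also have "\<dots> = word_of_set l (A \<inter> {..<l})" by (rule word_of_set_cong) auto
  finally show v: "v = word_of_set l (A \<inter> {..<l})" .
  have "word_of_set m A = word_of_set m (insert l (A \<inter> {..<l}))"
    using eq v word_of_set_append_tail[of "A \<inter> {..<l}" l m] l by auto
  moreover have "insert l (A \<inter> {..<l}) \<subseteq> {..<m}" using l by auto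
  ultimately show "A = insert l (A \<inter> {..<l})" using word_of_set_eq_iff A by blast
qed

lemma htrans_word_of_set:
  "htrans (word_of_set m A) p q \<longleftrightarrow> p < m \<and> q < m \<and> p \<in> A \<and> q \<notin> A \<and>
     (\<forall>j. min p q < j \<and> j < max p q \<longrightarrow> j \<notin> A)"
proof -
  have "(\<forall>j. min p q < j \<and> j < max p q \<longrightarrow> word_of_set m A ! j \<noteq> 1) \<longleftrightarrow>
        (\<forall>j. min p q < j \<and> j < max p q \<longrightarrow> j \<notin> A)" if "p < m" "q < m"
    using that by auto
  then show ?thesis unfolding htrans_def by (cases "p < m \<and> q < m") auto
qed

lemma swap_pos_word_of_set:
  "p \<in> A \<Longrightarrow> q \<notin> A \<Longrightarrow> p < m \<Longrightarrow> q < m \<Longrightarrow>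
   swap_pos (word_of_set m A) p q = word_of_set m (insert q (A - {p}))"
  unfolding swap_pos_def by (rule nth_equalityI) (auto simp: nth_list_update)

section \<open>The greedy algorithm\<close>

lemma greedy_step_stop: "cands S L = {} \<Longrightarrow> greedy_step S L = L"
  unfolding greedy_step_def by simp

lemma greedy_step_LeastI:
  assumes "(p,q) \<in> cands S L" "\<And>p' q'. (p',q') \<in> cands S L \<Longrightarrow> p \<le> p'"
    "\<And>q'. (p,q') \<in> cands S L \<Longrightarrow> q \<le> q'"
  shows "greedy_step S L = L @ [swap_pos (last L) p q]"
proof -
  have "(LEAST p. \<exists>q. (p,q) \<in> cands S L) = p"
    by (rule Least_equality) (use assms in auto)
  moreover have "(LEAST q. (p,q) \<in> cands S L) = q"
    by (rule Least_equality) (use assms in auto)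
  ultimately show ?thesis using assms(1) unfolding greedy_step_def Let_def by auto
qed

lemma greedy_step_cases:
  obtains "cands S L = {}" "greedy_step S L = L"
  | p q where "(p,q) \<in> cands S L" "\<And>p' q'. (p',q') \<in> cands S L \<Longrightarrow> p \<le> p'"
      "\<And>q'. (p,q') \<in> cands S L \<Longrightarrow> q \<le> q'" "greedy_step S L = L @ [swap_pos (last L) p q]"
proof (cases "cands S L = {}")
  case True then show ?thesis using that(1) greedy_step_stop by blast
next
  case False
  define p where "p = (LEAST p. \<exists>q. (p,q) \<in> cands S L)"
  define q where "q = (LEAST q. (p,q) \<in> cands S L)"
  have "\<exists>q. (p,q) \<in> cands S L" unfolding p_def by (rule LeastI_ex) (use False in auto)
  then have "(p,q) \<in> cands S L" unfolding q_def by (rule LeastI_ex)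
  moreover have "p \<le> p'" if "(p',q') \<in> cands S L" for p' q'
    unfolding p_def using that by (blast intro: Least_le)
  moreover have "q \<le> q'" if "(p,q') \<in> cands S L" for q'
    unfolding q_def using that by (blast intro: Least_le)
  moreover have "greedy_step S L = L @ [swap_pos (last L) p q]"
    using False unfolding greedy_step_def Let_def p_def q_def by simp
  ultimately show ?thesis using that(2) by blast
qed

lemma greedy_step_fixed_iff: "greedy_step S L = L \<longleftrightarrow> cands S L = {}"
  by (cases S L rule: greedy_step_cases) auto

lemma greedy_step_appends:
  obtains "greedy_step S L = L" | x where "greedy_step S L = L @ [x]" "x \<in> S" "x \<notin> set L"
  by (cases S L rule: greedy_step_cases) (auto simp: cands_def)

lemma funpow_greedy_step_fixed:
  "greedy_step S ((greedy_step S ^^ i) L) = (greedy_step S ^^ i) L \<Longrightarrow>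
   (greedy_step S ^^ (i + d)) L = (greedy_step S ^^ i) L"
  by (induction d) auto

lemma length_funpow_greedy_step:
  "greedy_step S ((greedy_step S ^^ i) L) \<noteq> (greedy_step S ^^ i) L \<Longrightarrow>
   length ((greedy_step S ^^ i) L) = length L + i"
proof (induction i)
  case (Suc i)
  have "greedy_step S ((greedy_step S ^^ i) L) \<noteq> (greedy_step S ^^ i) L"
    using Suc.prems by (metis funpow.simps(2) o_apply)
  with Suc.IH show ?case by (cases S "(greedy_step S ^^ i) L" rule: greedy_step_appends) auto
qed simp

lemma funpow_greedy_step_subset_distinct:
  "set L \<subseteq> S \<Longrightarrow> distinct L \<Longrightarrow>
   set ((greedy_step S ^^ i) L) \<subseteq> S \<and> distinct ((greedy_step S ^^ i) L)"
proof (induction i)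
  case (Suc i)
  then show ?case by (cases S "(greedy_step S ^^ i) L" rule: greedy_step_appends) auto
qed simp

lemma funpow_greedy_step_prefix: "\<exists>ys. (greedy_step S ^^ i) L = L @ ys"
proof (induction i)
  case (Suc i)
  then show ?case by (cases S "(greedy_step S ^^ i) L" rule: greedy_step_appends) auto
qed simp

lemma greedy_step_greedy:
  assumes "finite S" "a \<in> S"
  shows "greedy_step S (greedy S a) = greedy S a"
proof (rule ccontr)
  assume "greedy_step S (greedy S a) \<noteq> greedy S a"
  then have "length (greedy S a) = 1 + card S"
    using length_funpow_greedy_step[of S "card S" "[a]"] unfolding greedy_def by simp
  moreover have "set (greedy S a) \<subseteq> S" "distinct (greedy S a)"
    using funpow_greedy_step_subset_distinct[of "[a]" S "card S"] assms unfolding greedy_def by auto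
  then have "length (greedy S a) \<le> card S"
    by (metis distinct_card card_mono[OF assms(1)])
  ultimately show False by simp
qed

lemma cands_greedy: "finite S \<Longrightarrow> a \<in> S \<Longrightarrow> cands S (greedy S a) = {}"
  using greedy_step_fixed_iff greedy_step_greedy by blast

lemma greedy_nonempty_subset: "finite S \<Longrightarrow> a \<in> S \<Longrightarrow> greedy S a \<noteq> [] \<and> set (greedy S a) \<subseteq> S"
  using funpow_greedy_step_prefix[where S=S and i="card S" and L="[a]"] funpow_greedy_step_subset_distinct[of "[a]" S "card S"]
  unfolding greedy_def by auto

definition reaches :: "nat list set \<Rightarrow> nat list list \<Rightarrow> nat list list \<Rightarrow> bool" where
  "reaches S L L' \<longleftrightarrow> (\<exists>i. (greedy_step S ^^ i) L = L')"

lemma reaches_refl: "reaches S L L"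
  unfolding reaches_def by (metis funpow_0)

lemma reaches_trans: "reaches S L1 L2 \<Longrightarrow> reaches S L2 L3 \<Longrightarrow> reaches S L1 L3"
  unfolding reaches_def by (metis funpow_add comp_apply)

lemma reaches_step: "greedy_step S L = L' \<Longrightarrow> reaches S L L'"
  unfolding reaches_def by (rule exI[of _ 1]) simp

lemma greedy_eqI:
  assumes "finite S" "a \<in> S" "reaches S [a] L" "cands S L = {}"
  shows "greedy S a = L"
proof -
  obtain i where i: "(greedy_step S ^^ i) [a] = L" using assms(3) unfolding reaches_def by blast
  then have "greedy_step S ((greedy_step S ^^ i) [a]) = (greedy_step S ^^ i) [a]"
    using assms(4) greedy_step_stop by simp
  then have "(greedy_step S ^^ (i + card S)) [a] = L"
    using funpow_greedy_step_fixed i by metis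
  moreover have "(greedy_step S ^^ (card S + i)) [a] = greedy S a"
    using funpow_greedy_step_fixed[OF greedy_step_greedy[OF assms(1,2), unfolded greedy_def]]
    unfolding greedy_def .
  ultimately show ?thesis by (simp add: add.commute)
qed

lemma greedy_effective_steps:
  assumes "finite S" "a \<in> S"
  obtains j where "greedy S a = (greedy_step S ^^ j) [a]"
    "\<And>i. i < j \<Longrightarrow> cands S ((greedy_step S ^^ i) [a]) \<noteq> {}"
proof -
  let ?P = "\<lambda>j. cands S ((greedy_step S ^^ j) [a]) = {}"
  have "?P (card S)" using cands_greedy[OF assms] unfolding greedy_def .
  then have "?P (Least ?P)" by (rule LeastI)
  then have "greedy S a = (greedy_step S ^^ Least ?P) [a]"
    using greedy_eqI[OF assms] reaches_def by blast
  then show ?thesis using that not_less_Least by blast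
qed

section \<open>Words with a fixed tail\<close>

lemma htrans_append:
  "p < length v \<Longrightarrow> q < length v \<Longrightarrow> htrans (v @ t) p q \<longleftrightarrow> htrans v p q"
  unfolding htrans_def by (auto simp: nth_append)

lemma swap_pos_append:
  "p < length v \<Longrightarrow> q < length v \<Longrightarrow> swap_pos (v @ t) p q = swap_pos v p q @ t"
  unfolding swap_pos_def by (simp add: nth_append list_update_append)

lemma length_swap_pos[simp]: "length (swap_pos w p q) = length w"
  unfolding swap_pos_def by simp

lemma htrans_less_length: "htrans v p q \<Longrightarrow> p < length v \<and> q < length v"
  unfolding htrans_def by simp

text \<open>If no 1 of a word in \<open>P\<close> can jump over the tail, the greedy algorithm for \<open>S\<close>
  started at \<open>v @ tail\<close> replays the greedy algorithm for \<open>P\<close> started at \<open>v\<close>; the list \<open>H\<close>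
  is an earlier history, disjoint from these words.\<close>
locale prefix_simulation =
  fixes S P :: "nat list set" and l :: nat and tail :: "nat list"
  assumes append_tail_in_iff: "\<And>v. length v = l \<Longrightarrow> v @ tail \<in> S \<longleftrightarrow> v \<in> P"
    and length_P: "\<And>v. v \<in> P \<Longrightarrow> length v = l"
    and tail_blocks: "\<And>v p q. v \<in> P \<Longrightarrow> p < l \<Longrightarrow> htrans (v @ tail) p q \<Longrightarrow>
                    swap_pos (v @ tail) p q \<in> S \<Longrightarrow> q < l"
begin

lemma cands_append_tail_iff:
  assumes H: "set H \<inter> (\<lambda>v. v @ tail) ` P = {}"
    and ne: "L \<noteq> []" and sub: "set L \<subseteq> P" and p: "p < l"
  shows "(p,q) \<in> cands S (H @ map (\<lambda>v. v @ tail) L) \<longleftrightarrow> (p,q) \<in> cands P L"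
proof -
  define v where "v = last L"
  have v: "v \<in> P" using ne sub unfolding v_def by auto
  have lv: "length v = l" using length_P[OF v] .
  have last: "last (H @ map (\<lambda>v. v @ tail) L) = v @ tail"
    using ne unfolding v_def by (simp add: last_map)
  have swap: "swap_pos (v @ tail) p q = swap_pos v p q @ tail" if "q < l"
    using swap_pos_append p that lv by simp
  show ?thesis
  proof
    assume "(p,q) \<in> cands S (H @ map (\<lambda>v. v @ tail) L)"
    then have h: "htrans (v @ tail) p q" "swap_pos (v @ tail) p q \<in> S"
       "swap_pos (v @ tail) p q \<notin> set (H @ map (\<lambda>v. v @ tail) L)"
      unfolding cands_def last by auto
    have q: "q < l" using tail_blocks[OF v p h(1,2)] .
    show "(p,q) \<in> cands P L"
      using h swap[OF q] htrans_append[of p v q] p q lv append_tail_in_iff[of "swap_pos v p q"]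
      unfolding cands_def v_def[symmetric] by auto
  next
    assume "(p,q) \<in> cands P L"
    then have h: "htrans v p q" "swap_pos v p q \<in> P" "swap_pos v p q \<notin> set L"
      unfolding cands_def v_def by auto
    have q: "q < l" using htrans_less_length[OF h(1)] lv by simp
    show "(p,q) \<in> cands S (H @ map (\<lambda>v. v @ tail) L)"
      using h swap[OF q] htrans_append[of p v q] p q lv append_tail_in_iff[of "swap_pos v p q"] H
      unfolding cands_def last by auto
  qed
qed

lemma cands_append_tail_stuck:
  assumes "set H \<inter> (\<lambda>v. v @ tail) ` P = {}" "L \<noteq> []" "set L \<subseteq> P" "cands P L = {}"
    and "(p,q) \<in> cands S (H @ map (\<lambda>v. v @ tail) L)"
  shows "l \<le> p"
  using cands_append_tail_iff[OF assms(1-3), of p q] assms(4,5) by (cases "p < l") auto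

lemma greedy_step_append_tail:
  assumes H: "set H \<inter> (\<lambda>v. v @ tail) ` P = {}" and ne: "L \<noteq> []" and sub: "set L \<subseteq> P"
    and c: "cands P L \<noteq> {}"
  shows "greedy_step S (H @ map (\<lambda>v. v @ tail) L) = H @ map (\<lambda>v. v @ tail) (greedy_step P L)"
proof (cases P L rule: greedy_step_cases)
  case (2 p q)
  have "last L \<in> P" using ne sub by auto
  then have pl: "p < l" and ql: "q < l"
    using 2(1) htrans_less_length length_P unfolding cands_def by fastforce+
  note iff = cands_append_tail_iff[OF H ne sub]
  have "greedy_step S (H @ map (\<lambda>v. v @ tail) L) =
        (H @ map (\<lambda>v. v @ tail) L) @ [swap_pos (last (H @ map (\<lambda>v. v @ tail) L)) p q]"
  proof (rule greedy_step_LeastI)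
    show "(p,q) \<in> cands S (H @ map (\<lambda>v. v @ tail) L)" using iff[OF pl] 2(1) by simp
    show "p \<le> p'" if "(p',q') \<in> cands S (H @ map (\<lambda>v. v @ tail) L)" for p' q'
      using iff[of p' q'] 2(2) that pl by (cases "p' < l") auto
    show "q \<le> q'" if "(p,q') \<in> cands S (H @ map (\<lambda>v. v @ tail) L)" for q'
      using iff[OF pl] 2(3) that by blast
  qed
  moreover have "last (H @ map (\<lambda>v. v @ tail) L) = last L @ tail"
    using ne by (simp add: last_map)
  ultimately show ?thesis
    using 2(4) swap_pos_append pl ql length_P[OF \<open>last L \<in> P\<close>] by simp
qed (use c in simp)

lemma reaches_append_tail:
  assumes fin: "finite P" and v0: "v0 \<in> P" and H: "set H \<inter> (\<lambda>v. v @ tail) ` P = {}"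
  shows "reaches S (H @ [v0 @ tail]) (H @ map (\<lambda>v. v @ tail) (greedy P v0))"
proof -
  obtain j where j: "greedy P v0 = (greedy_step P ^^ j) [v0]"
    "\<And>i. i < j \<Longrightarrow> cands P ((greedy_step P ^^ i) [v0]) \<noteq> {}"
    using greedy_effective_steps[OF fin v0] by blast
  have "(greedy_step S ^^ i) (H @ [v0 @ tail]) = H @ map (\<lambda>v. v @ tail) ((greedy_step P ^^ i) [v0])"
    if "i \<le> j" for i
    using that
  proof (induction i)
    case (Suc i)
    have "(greedy_step P ^^ i) [v0] \<noteq> []"
      using funpow_greedy_step_prefix[where S=P and i=i and L="[v0]"] by auto
    moreover have "set ((greedy_step P ^^ i) [v0]) \<subseteq> P"
      using funpow_greedy_step_subset_distinct[of "[v0]" P i] v0 by simp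
    ultimately show ?case using Suc greedy_step_append_tail[OF H] j(2) by simp
  qed simp
  then show ?thesis unfolding reaches_def using j(1) by auto
qed

end

definition sparse :: "nat set \<Rightarrow> bool" where
  "sparse A \<longleftrightarrow> (\<forall>i\<in>A. Suc i \<notin> A)"

text \<open>Position sets of the words of length \<open>m\<close> and weight \<open>k\<close> without factor 11 whose last
  letter is 0. Appending a 0 to the words of \<open>F_n(2,k)\<close> does not change the greedy lists,
  and afterwards every word splits uniquely as a shorter such word, a 1, and a block of 0s.\<close>
definition fib_set :: "nat \<Rightarrow> nat \<Rightarrow> nat set \<Rightarrow> bool" where
  "fib_set m k A \<longleftrightarrow> (\<forall>i\<in>A. Suc i < m) \<and> card A = k \<and> sparse A"

definition Fib0 :: "nat \<Rightarrow> nat \<Rightarrow> nat list set" where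
  "Fib0 m k = word_of_set m ` {A. fib_set m k A}"

lemma fib_set_subset: "fib_set m k A \<Longrightarrow> A \<subseteq> {..<m}"
  unfolding fib_set_def by auto

lemma fib_set_0_iff: "fib_set m 0 A \<longleftrightarrow> A = {}"
  using fib_set_subset finite_subset[of A "{..<m}"] by (auto simp: fib_set_def sparse_def)

lemma fib_set_insert_iff:
  assumes "B \<subseteq> {..<p}"
  shows "fib_set m (Suc k) (insert p B) \<longleftrightarrow> fib_set p k B \<and> Suc p < m"
proof -
  have "finite B" "p \<notin> B" using assms finite_subset by auto
  moreover have "sparse (insert p B) \<longleftrightarrow> sparse B \<and> (\<forall>i\<in>B. Suc i \<noteq> p)"
    using assms by (auto simp: sparse_def)
  moreover have "(\<forall>i\<in>B. Suc i \<noteq> p) \<longleftrightarrow> (\<forall>i\<in>B. Suc i < p)" using assms by force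
  ultimately show ?thesis using assms unfolding fib_set_def by auto
qed

lemma fib_set_Max:
  assumes "fib_set m (Suc k) A"
  shows "insert (Max A) (A - {Max A}) = A" "A - {Max A} \<subseteq> {..<Max A}"
    and "fib_set (Max A) k (A - {Max A})" "Suc (Max A) < m"
proof -
  have "finite A" "A \<noteq> {}" using assms card_ge_0_finite unfolding fib_set_def by force+
  then show A: "insert (Max A) (A - {Max A}) = A" and B: "A - {Max A} \<subseteq> {..<Max A}"
    using Max_in Max_ge by (blast, fastforce)
  show "fib_set (Max A) k (A - {Max A})" "Suc (Max A) < m"
    using fib_set_insert_iff[OF B] A assms by metis+
qed

lemma fib_set_card_bound: "fib_set m k A \<Longrightarrow> 2 * k \<le> m"
proof (induction k arbitrary: m A)
  case (Suc k)
  then show ?case using fib_set_Max[OF Suc.prems] Suc.IH by fastforce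
qed simp

lemma finite_Fib0: "finite (Fib0 m k)"
proof -
  have "{A. fib_set m k A} \<subseteq> Pow {..<m}" using fib_set_subset by blast
  then have "finite {A. fib_set m k A}" by (rule finite_subset) simp
  then show ?thesis unfolding Fib0_def by simp
qed

lemma word_of_set_in_Fib0_iff:
  assumes "A \<subseteq> {..<m}"
  shows "word_of_set m A \<in> Fib0 m k \<longleftrightarrow> fib_set m k A"
proof
  assume "word_of_set m A \<in> Fib0 m k"
  then obtain B where "fib_set m k B" "word_of_set m A = word_of_set m B" unfolding Fib0_def by auto
  then show "fib_set m k A" using word_of_set_eq_iff[OF assms fib_set_subset] by auto
qed (auto simp: Fib0_def)

lemma Fib0E:
  assumes "w \<in> Fib0 m k"
  obtains A where "w = word_of_set m A" "fib_set m k A"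
  using assms unfolding Fib0_def by auto

lemma length_Fib0: "w \<in> Fib0 m k \<Longrightarrow> length w = m"
  unfolding Fib0_def by auto

lemma Fib0_0: "Fib0 m 0 = {word_of_set m {}}"
  unfolding Fib0_def fib_set_0_iff by auto

text \<open>\<open>comb x k = {x, x + 2, \<dots>, x + 2(k - 1)}\<close> is the position set of the paper's generators
  \<open>0\<^sup>x 1 (01)\<^sup>k\<^sup>-\<^sup>1 0\<dots>0\<close>.\<close>
definition comb :: "nat \<Rightarrow> nat \<Rightarrow> nat set" where
  "comb x k = (\<lambda>j. x + 2 * j) ` {..<k}"

lemma comb_iff: "y \<in> comb x k \<longleftrightarrow> x \<le> y \<and> y < x + 2 * k \<and> even y = even x"
proof
  assume h: "x \<le> y \<and> y < x + 2 * k \<and> even y = even x"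
  then have "even (y - x)" by presburger
  then obtain j where "y - x = 2 * j" by (rule evenE)
  then have "y = x + 2 * j" "j < k" using h by auto
  then show "y \<in> comb x k" unfolding comb_def by auto
next
  assume "y \<in> comb x k"
  then obtain j where "j < k" "y = x + 2 * j" unfolding comb_def by auto
  then show "x \<le> y \<and> y < x + 2 * k \<and> even y = even x" by simp
qed

lemma comb_0[simp]: "comb x 0 = {}"
  unfolding comb_def by simp

lemma comb_Suc: "comb x (Suc k) = insert (x + 2 * k) (comb x k)"
  unfolding comb_def by (auto simp: lessThan_Suc)

lemma card_comb: "card (comb x k) = k"
  unfolding comb_def by (subst card_image) (auto simp: inj_on_def)

lemma Suc_lt_comb: "y \<in> comb x k \<Longrightarrow> Suc y < x + 2 * k"
  unfolding comb_iff by presburger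

lemma sparse_comb: "sparse (comb x k)"
  unfolding sparse_def
proof (intro ballI notI)
  fix i assume "i \<in> comb x k" "Suc i \<in> comb x k"
  then have "even i = even x" "even (Suc i) = even x" unfolding comb_iff by blast+
  then show False by simp
qed

lemma fib_set_comb: "x + 2 * k \<le> m \<Longrightarrow> fib_set m k (comb x k)"
  unfolding fib_set_def using Suc_lt_comb sparse_comb card_comb by fastforce

lemma comb_eq_iff: "0 < k \<Longrightarrow> comb x k = comb y k \<longleftrightarrow> x = y"
proof
  assume "0 < k" "comb x k = comb y k"
  moreover have "x \<in> comb x k" "y \<in> comb y k" using \<open>0 < k\<close> by (auto simp: comb_iff)
  ultimately have "x \<in> comb y k" "y \<in> comb x k" by auto
  then show "x = y" unfolding comb_iff by linarith
qed simp

lemma image_shift_comb: "(\<lambda>y. x + y) ` comb 0 k = comb x k"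
  unfolding comb_def by (auto simp: image_image)

section \<open>Slicing by the position of the last 1\<close>

text \<open>A word of \<open>Fib0 m (Suc \<kappa>)\<close> lies in slice \<open>c\<close> if its last 1 is at position \<open>pos c\<close>;
  it is then a word of \<open>Pre c = Fib0 (pos c) \<kappa>\<close> followed by \<open>tail c = 10\<dots>0\<close>.\<close>
locale slicing =
  fixes \<kappa> m :: nat
  assumes room: "2 * Suc \<kappa> \<le> m"
begin

definition M :: nat where "M = m - 2 * Suc \<kappa>"
definition pos :: "nat \<Rightarrow> nat" where "pos c = 2 * \<kappa> + c"
definition S :: "nat list set" where "S = Fib0 m (Suc \<kappa>)"
definition Pre :: "nat \<Rightarrow> nat list set" where "Pre c = Fib0 (pos c) \<kappa>"
definition tail :: "nat \<Rightarrow> nat list" where "tail c = word_of_set (m - pos c) {0}"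
definition slice :: "nat \<Rightarrow> nat list set" where "slice c = (\<lambda>v. v @ tail c) ` Pre c"

definition comb_word :: "nat \<Rightarrow> nat \<Rightarrow> nat list" where
  "comb_word c x = word_of_set m (insert (pos c) (comb x \<kappa>))"

lemma finite_S: "finite S"
  unfolding S_def by (rule finite_Fib0)

lemma finite_Pre: "finite (Pre c)"
  unfolding Pre_def by (rule finite_Fib0)

lemma Suc_pos_less: "c \<le> M \<Longrightarrow> Suc (pos c) < m"
  using room unfolding M_def pos_def by simp

lemma word_of_set_append_tail_pos:
  "c \<le> M \<Longrightarrow> B \<subseteq> {..<pos c} \<Longrightarrow>
   word_of_set (pos c) B @ tail c = word_of_set m (insert (pos c) B)"
  unfolding tail_def using word_of_set_append_tail Suc_pos_less by (metis Suc_lessD)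

lemma slice_iff:
  assumes c: "c \<le> M"
  shows "w \<in> slice c \<longleftrightarrow> (\<exists>B. fib_set (pos c) \<kappa> B \<and> w = word_of_set m (insert (pos c) B))"
proof -
  have "slice c = (\<lambda>B. word_of_set (pos c) B @ tail c) ` {B. fib_set (pos c) \<kappa> B}"
    unfolding slice_def Pre_def Fib0_def by (simp add: image_image)
  also have "\<dots> = (\<lambda>B. word_of_set m (insert (pos c) B)) ` {B. fib_set (pos c) \<kappa> B}"
    using word_of_set_append_tail_pos[OF c] fib_set_subset by (intro image_cong) auto
  finally show ?thesis by auto
qed

lemma slice_subset: "c \<le> M \<Longrightarrow> slice c \<subseteq> S"
proof
  fix w assume c: "c \<le> M" and "w \<in> slice c"
  then obtain B where B: "fib_set (pos c) \<kappa> B" "w = word_of_set m (insert (pos c) B)"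
    using slice_iff by blast
  have sub: "B \<subseteq> {..<pos c}" using fib_set_subset[OF B(1)] .
  then have "insert (pos c) B \<subseteq> {..<m}" using Suc_pos_less[OF c] by auto
  then show "w \<in> S"
    unfolding S_def B(2) using word_of_set_in_Fib0_iff fib_set_insert_iff[OF sub] B(1) Suc_pos_less[OF c]
    by blast
qed

lemma slice_disjoint:
  assumes c: "c \<le> M" and d: "d \<le> M" and ne: "c \<noteq> d"
  shows "slice c \<inter> slice d = {}"
proof (rule ccontr)
  assume "slice c \<inter> slice d \<noteq> {}"
  then obtain w where "w \<in> slice c" "w \<in> slice d" by blast
  then obtain B B' where B: "fib_set (pos c) \<kappa> B" "w = word_of_set m (insert (pos c) B)"
    and B': "fib_set (pos d) \<kappa> B'" "w = word_of_set m (insert (pos d) B')"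
    using slice_iff[OF c] slice_iff[OF d] by meson
  have "insert (pos c) B \<subseteq> {..<m}" "insert (pos d) B' \<subseteq> {..<m}"
    using fib_set_subset[OF B(1)] fib_set_subset[OF B'(1)] Suc_pos_less[OF c] Suc_pos_less[OF d]
    by auto
  then have eq: "insert (pos c) B = insert (pos d) B'"
    using word_of_set_eq_iff B(2) B'(2) by simp
  have "pos c \<noteq> pos d" using ne unfolding pos_def by simp
  then have "pos c \<in> B'" "pos d \<in> B" using eq by (metis insertE insertI1)+
  then have "pos c < pos d" "pos d < pos c" using fib_set_subset[OF B(1)] fib_set_subset[OF B'(1)] by auto
  then show False by simp
qed

lemma S_eq_Union_slice: "S = (\<Union>c\<le>M. slice c)"
proof
  show "(\<Union>c\<le>M. slice c) \<subseteq> S" using slice_subset by blast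
next
  show "S \<subseteq> (\<Union>c\<le>M. slice c)"
  proof
    fix w assume "w \<in> S"
    then obtain A where A: "w = word_of_set m A" "fib_set m (Suc \<kappa>) A"
      unfolding S_def by (auto elim: Fib0E)
    define c where "c = Max A - 2 * \<kappa>"
    have "2 * \<kappa> \<le> Max A" using fib_set_card_bound fib_set_Max(3)[OF A(2)] by blast
    then have pc: "pos c = Max A" unfolding c_def pos_def by simp
    have cM: "c \<le> M" using fib_set_Max(4)[OF A(2)] pc room unfolding M_def pos_def by arith
    have "w = word_of_set m (insert (Max A) (A - {Max A}))" using A(1) fib_set_Max(1)[OF A(2)] by simp
    then have "w \<in> slice c"
      unfolding slice_iff[OF cM] pc using fib_set_Max(3)[OF A(2)] by blast
    then show "w \<in> (\<Union>c\<le>M. slice c)" using cM by blast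
  qed
qed

lemma length_Pre: "v \<in> Pre c \<Longrightarrow> length v = pos c"
  unfolding Pre_def by (rule length_Fib0)

lemma append_tail_in_S_iff:
  assumes c: "c \<le> M" and lv: "length v = pos c"
  shows "v @ tail c \<in> S \<longleftrightarrow> v \<in> Pre c"
proof
  assume "v @ tail c \<in> S"
  then obtain A where A: "v @ tail c = word_of_set m A" "fib_set m (Suc \<kappa>) A"
    unfolding S_def by (auto elim: Fib0E)
  have pc: "pos c < m" using Suc_pos_less[OF c] by simp
  have "word_of_set m A = v @ word_of_set (m - pos c) {0}" using A(1) unfolding tail_def by simp
  note split = word_of_set_split_tail[OF fib_set_subset[OF A(2)] pc lv this]
  have "fib_set m (Suc \<kappa>) (insert (pos c) (A \<inter> {..<pos c}))" using A(2) split(1) by metis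
  then have "fib_set (pos c) \<kappa> (A \<inter> {..<pos c})"
    using fib_set_insert_iff[of "A \<inter> {..<pos c}" "pos c" m \<kappa>] by auto
  then show "v \<in> Pre c"
    unfolding Pre_def split(2) by (simp add: word_of_set_in_Fib0_iff)
next
  assume "v \<in> Pre c"
  then show "v @ tail c \<in> S" using slice_subset[OF c] unfolding slice_def by blast
qed

lemma prefix_simulation_slice:
  assumes c: "c \<le> M"
  shows "prefix_simulation S (Pre c) (pos c) (tail c)"
proof
  show "v @ tail c \<in> S \<longleftrightarrow> v \<in> Pre c" if "length v = pos c" for v
    using append_tail_in_S_iff[OF c that] .
  show "length v = pos c" if "v \<in> Pre c" for v
    using length_Pre[OF that] .
next
  fix v p q assume v: "v \<in> Pre c" and p: "p < pos c" and h: "htrans (v @ tail c) p q"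
  have "(v @ tail c) ! pos c = 1"
    using length_Pre[OF v] Suc_pos_less[OF c] by (simp add: nth_append tail_def)
  show "q < pos c"
  proof (rule ccontr)
    assume "\<not> q < pos c"
    then have "q = pos c \<or> min p q < pos c \<and> pos c < max p q" using p by auto
    then show False using h \<open>(v @ tail c) ! pos c = 1\<close> unfolding htrans_def by auto
  qed
qed

lemma comb_less: "y \<in> comb x \<kappa> \<Longrightarrow> y < x + 2 * \<kappa>"
  unfolding comb_iff by simp

lemma comb_subset_pos: "x \<le> c \<Longrightarrow> comb x \<kappa> \<subseteq> {..<pos c}"
  using comb_less unfolding pos_def by fastforce

lemma comb_in_Pre: "x \<le> c \<Longrightarrow> word_of_set (pos c) (comb x \<kappa>) \<in> Pre c"
  unfolding Pre_def using word_of_set_in_Fib0_iff fib_set_comb[of x \<kappa> "pos c"] comb_subset_pos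
  unfolding pos_def by fastforce

lemma comb_word_append_tail:
  "x \<le> c \<Longrightarrow> c \<le> M \<Longrightarrow> comb_word c x = word_of_set (pos c) (comb x \<kappa>) @ tail c"
  unfolding comb_word_def using word_of_set_append_tail_pos comb_subset_pos by simp

lemma comb_word_in_slice: "x \<le> c \<Longrightarrow> c \<le> M \<Longrightarrow> comb_word c x \<in> slice c"
  unfolding slice_def using comb_word_append_tail comb_in_Pre by simp

lemma comb_word_diag: "comb_word c c = word_of_set m (comb c (Suc \<kappa>))"
  unfolding comb_word_def comb_Suc pos_def by (simp add: add.commute)

lemma comb_word_kappa_0: "\<kappa> = 0 \<Longrightarrow> comb_word c x = comb_word c y"
  unfolding comb_word_def by simp

end

context slicing
begin

definition frozen_below :: "nat list list \<Rightarrow> nat \<Rightarrow> bool" where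
  "frozen_below L c \<longleftrightarrow> (\<forall>p q. (p,q) \<in> cands S L \<longrightarrow> pos c \<le> p)"

definition targets :: "nat list list \<Rightarrow> nat \<Rightarrow> nat \<Rightarrow> nat set" where
  "targets L c x = {c'. x \<le> c' \<and> c' \<le> M \<and> c' \<noteq> c \<and> comb_word c' x \<notin> set L}"

lemma run_slice:
  assumes c: "c \<le> M" and v0: "v0 \<in> Pre c" and H: "set H \<inter> slice c = {}"
  shows "reaches S (H @ [v0 @ tail c]) (H @ map (\<lambda>v. v @ tail c) (greedy (Pre c) v0))"
    and "frozen_below (H @ map (\<lambda>v. v @ tail c) (greedy (Pre c) v0)) c"
proof -
  interpret prefix_simulation S "Pre c" "pos c" "tail c" by (rule prefix_simulation_slice[OF c])
  have H': "set H \<inter> (\<lambda>v. v @ tail c) ` Pre c = {}" using H unfolding slice_def .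
  show "reaches S (H @ [v0 @ tail c]) (H @ map (\<lambda>v. v @ tail c) (greedy (Pre c) v0))"
    using reaches_append_tail[OF finite_Pre v0 H'] .
  show "frozen_below (H @ map (\<lambda>v. v @ tail c) (greedy (Pre c) v0)) c"
    unfolding frozen_below_def
    using cands_append_tail_stuck[OF H' _ _ cands_greedy[OF finite_Pre v0]]
      greedy_nonempty_subset[OF finite_Pre v0] by blast
qed

lemma htrans_swap_pos_comb_word:
  assumes c: "c \<le> M" "x \<le> c" and c': "c' \<le> M" "x \<le> c'" "c' \<noteq> c"
  shows "htrans (comb_word c x) (pos c) (pos c')"
    and "swap_pos (comb_word c x) (pos c) (pos c') = comb_word c' x"
proof -
  define A where "A = insert (pos c) (comb x \<kappa>)"
  have x: "x + 2 * \<kappa> \<le> pos c" "x + 2 * \<kappa> \<le> pos c'" using c c' unfolding pos_def by simp_all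
  have "pos c \<noteq> pos c'" using c' unfolding pos_def by simp
  then have qA: "pos c' \<notin> A" unfolding A_def using x comb_less by fastforce
  have between: "j \<notin> A" if "min (pos c) (pos c') < j \<and> j < max (pos c) (pos c')" for j
    using that x comb_less[of j x] unfolding A_def by (auto simp: min_def max_def split: if_splits)
  show "htrans (comb_word c x) (pos c) (pos c')"
    unfolding comb_word_def A_def[symmetric] htrans_word_of_set
    using qA between Suc_pos_less[OF c(1)] Suc_pos_less[OF c'(1)] unfolding A_def by auto
  have "A - {pos c} = comb x \<kappa>" unfolding A_def using x comb_less by fastforce
  then show "swap_pos (comb_word c x) (pos c) (pos c') = comb_word c' x"
    unfolding comb_word_def A_def[symmetric] comb_word_def
    using swap_pos_word_of_set[of "pos c" A "pos c'" m] qA Suc_pos_less[OF c(1)] Suc_pos_less[OF c'(1)]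
    unfolding A_def by simp
qed

text \<open>When only the last 1 can move, it cannot land left of the last 1 of the comb: it would
  jump over that 1 or become adjacent to it.\<close>
lemma cands_at_comb_wordD:
  assumes c: "c \<le> M" and x: "x \<le> c" and x0: "\<kappa> = 0 \<longrightarrow> x = 0"
    and last: "last L = comb_word c x" and frozen: "frozen_below L c"
    and pq: "(p,q) \<in> cands S L"
  shows "p = pos c" and "\<exists>c'\<in>targets L c x. q = pos c'"
proof -
  define A where "A = insert (pos c) (comb x \<kappa>)"
  have xl: "x + 2 * \<kappa> \<le> pos c" using x unfolding pos_def by simp
  have h: "htrans (word_of_set m A) p q" "swap_pos (word_of_set m A) p q \<in> S"
    "swap_pos (word_of_set m A) p q \<notin> set L"
    using pq last unfolding cands_def comb_word_def A_def by auto
  have ht: "p < m" "q < m" "p \<in> A" "q \<notin> A" "\<And>j. min p q < j \<and> j < max p q \<Longrightarrow> j \<notin> A"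
    using h(1) unfolding htrans_word_of_set by auto
  show p: "p = pos c"
    using ht(3) frozen pq comb_less xl unfolding A_def frozen_below_def by fastforce
  have sw: "swap_pos (word_of_set m A) p q = word_of_set m (insert q (comb x \<kappa>))"
    using swap_pos_word_of_set[OF ht(3) ht(4) ht(1) ht(2)] p comb_less xl unfolding A_def
    by (metis Diff_insert_absorb less_le_not_le)
  have "insert q (comb x \<kappa>) \<subseteq> {..<m}" using ht(2) comb_less xl Suc_pos_less[OF c] by fastforce
  then have g: "fib_set m (Suc \<kappa>) (insert q (comb x \<kappa>))"
    using h(2) sw word_of_set_in_Fib0_iff unfolding S_def by simp
  have qge: "x + 2 * \<kappa> \<le> q"
  proof (rule ccontr)
    assume qlt: "\<not> x + 2 * \<kappa> \<le> q"
    then have k0: "\<kappa> \<noteq> 0" using x0 by auto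
    define y where "y = x + 2 * \<kappa> - 2"
    have yA: "y \<in> comb x \<kappa>" unfolding comb_iff y_def using k0 by presburger
    then have "q \<noteq> y" using ht(4) unfolding A_def by auto
    then have "q < y \<or> q = Suc y" using qlt unfolding y_def by linarith
    moreover have "y < pos c" using xl k0 unfolding y_def by simp
    ultimately show False
      using ht(5)[of y] p yA g unfolding A_def fib_set_def sparse_def by auto
  qed
  define c' where "c' = q - 2 * \<kappa>"
  have qc: "q = pos c'" unfolding c'_def pos_def using qge by simp
  have "Suc q < m" using g unfolding fib_set_def by simp
  then have "c' \<le> M" unfolding c'_def M_def using qge by arith
  moreover have "x \<le> c'" "c' \<noteq> c" using qge ht(4) qc unfolding c'_def A_def by auto
  moreover have "comb_word c' x \<notin> set L" using h(3) sw qc unfolding comb_word_def by simp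
  ultimately show "\<exists>c'\<in>targets L c x. q = pos c'" using qc unfolding targets_def by blast
qed

lemma cands_at_comb_word:
  assumes c: "c \<le> M" and x: "x \<le> c" and x0: "\<kappa> = 0 \<longrightarrow> x = 0"
    and last: "last L = comb_word c x" and frozen: "frozen_below L c"
  shows "(p,q) \<in> cands S L \<longleftrightarrow> p = pos c \<and> (\<exists>c'\<in>targets L c x. q = pos c')"
proof
  assume "p = pos c \<and> (\<exists>c'\<in>targets L c x. q = pos c')"
  then obtain c' where "p = pos c" "q = pos c'" "c' \<le> M" "x \<le> c'" "c' \<noteq> c" "comb_word c' x \<notin> set L"
    unfolding targets_def by blast
  moreover have "comb_word c' x \<in> S" using comb_word_in_slice slice_subset calculation by blast
  ultimately show "(p,q) \<in> cands S L"
    using htrans_swap_pos_comb_word[OF c x] last unfolding cands_def by simp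
qed (use cands_at_comb_wordD[OF assms] in blast)

lemma greedy_step_at_comb_word:
  assumes c: "c \<le> M" and x: "x \<le> c" and x0: "\<kappa> = 0 \<longrightarrow> x = 0"
    and last: "last L = comb_word c x" and frozen: "frozen_below L c"
  shows "targets L c x = {} \<Longrightarrow> greedy_step S L = L"
    and "targets L c x \<noteq> {} \<Longrightarrow> greedy_step S L = L @ [comb_word (Min (targets L c x)) x]"
proof -
  note cands = cands_at_comb_word[OF assms]
  show "targets L c x = {} \<Longrightarrow> greedy_step S L = L"
    using cands by (intro greedy_step_stop) auto
  assume ne: "targets L c x \<noteq> {}"
  define t where "t = Min (targets L c x)"
  have fin: "finite (targets L c x)" unfolding targets_def by simp
  have t: "t \<in> targets L c x" using Min_in[OF fin ne] unfolding t_def .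
  then have tc: "t \<le> M" "x \<le> t" "t \<noteq> c" unfolding targets_def by auto
  have "greedy_step S L = L @ [swap_pos (last L) (pos c) (pos t)]"
  proof (rule greedy_step_LeastI)
    show "(pos c, pos t) \<in> cands S L" using cands t by blast
    show "pos c \<le> p'" if "(p', q') \<in> cands S L" for p' q' using cands that by simp
    show "pos t \<le> q'" if "(pos c, q') \<in> cands S L" for q'
      using cands that Min_le[OF fin] unfolding t_def pos_def by fastforce
  qed
  then show "greedy_step S L = L @ [comb_word (Min (targets L c x)) x]"
    using htrans_swap_pos_comb_word(2)[OF c x tc(1,2,3)] last unfolding t_def by simp
qed

end

section \<open>The induction step\<close>

text \<open>The index of the generator at which the greedy list started at generator \<open>i\<close> ends,
  when the generators are indexed by \<open>0, \<dots>, M\<close>.\<close>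
definition comb_end :: "nat \<Rightarrow> nat \<Rightarrow> nat \<Rightarrow> nat" where
  "comb_end k i M = (if i < M then M else if odd k \<and> 0 < M then M - 1 else 0)"

lemma comb_end_le: "comb_end k i M \<le> M"
  unfolding comb_end_def by auto

definition comb_start_property :: "nat \<Rightarrow> bool" where
  "comb_start_property k \<longleftrightarrow> (\<forall>m i. 2 * k \<le> m \<longrightarrow> i \<le> m - 2 * k \<longrightarrow>
     set (greedy (Fib0 m k) (word_of_set m (comb i k))) = Fib0 m k \<and>
     last (greedy (Fib0 m k) (word_of_set m (comb i k))) = word_of_set m (comb (comb_end k i (m - 2 * k)) k))"

definition non_comb_start_property :: "nat \<Rightarrow> bool" where
  "non_comb_start_property k \<longleftrightarrow> (\<forall>m A. 2 * k \<le> m \<longrightarrow> A \<subseteq> {..<m} \<longrightarrow> word_of_set m A \<in> Fib0 m k \<longrightarrow>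
     (\<forall>i \<le> m - 2 * k. A \<noteq> comb i k) \<longrightarrow>
     last (greedy (Fib0 m k) (word_of_set m A)) = word_of_set m (comb (m - 2 * k) k) \<and>
     word_of_set m (comb 0 k) \<notin> set (greedy (Fib0 m k) (word_of_set m A)))"

locale slicing_IH = slicing +
  assumes comb_IH: "comb_start_property \<kappa>"
    and non_comb_IH: "non_comb_start_property \<kappa>"
begin

text \<open>For \<open>\<kappa> = 0\<close> the prefix is empty and the index of its comb is irrelevant; it is
  normalised to 0.\<close>
definition prefix_end :: "nat \<Rightarrow> nat \<Rightarrow> nat" where
  "prefix_end y c = (if \<kappa> = 0 then 0 else comb_end \<kappa> y c)"

text \<open>The state of the greedy list after a complete run through slice \<open>c\<close>.\<close>
definition at_comb :: "nat list list \<Rightarrow> nat \<Rightarrow> nat \<Rightarrow> bool" where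
  "at_comb L c x \<longleftrightarrow> c \<le> M \<and> x \<le> c \<and> (\<kappa> = 0 \<longrightarrow> x = 0) \<and> L \<noteq> [] \<and>
     last L = comb_word c x \<and> frozen_below L c"

lemma run_slice_from_comb:
  assumes c: "c \<le> M" and y: "y \<le> c" and H: "set H \<inter> slice c = {}"
  defines "L \<equiv> H @ map (\<lambda>v. v @ tail c) (greedy (Pre c) (word_of_set (pos c) (comb y \<kappa>)))"
  shows "reaches S (H @ [comb_word c y]) L" and "set L = set H \<union> slice c"
    and "at_comb L c (prefix_end y c)"
proof -
  let ?v = "word_of_set (pos c) (comb y \<kappa>)"
  let ?G = "greedy (Pre c) ?v"
  have v: "?v \<in> Pre c" using comb_in_Pre[OF y] .
  show "reaches S (H @ [comb_word c y]) L"
    using run_slice(1)[OF c v H] comb_word_append_tail[OF y c] unfolding L_def by simp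
  have IH: "set ?G = Pre c" "last ?G = word_of_set (pos c) (comb (comb_end \<kappa> y c) \<kappa>)"
    using comb_IH y unfolding comb_start_property_def Pre_def pos_def by auto
  then show "set L = set H \<union> slice c" unfolding L_def slice_def by simp
  have Gne: "?G \<noteq> []" using greedy_nonempty_subset[OF finite_Pre v] by blast
  have "last L = word_of_set (pos c) (comb (comb_end \<kappa> y c) \<kappa>) @ tail c"
    unfolding L_def using Gne IH(2) by (simp add: last_map)
  also have "\<dots> = comb_word c (prefix_end y c)"
    using comb_word_append_tail[OF comb_end_le c] comb_word_kappa_0 unfolding prefix_end_def by metis
  finally show "at_comb L c (prefix_end y c)"
    using run_slice(2)[OF c v H] c Gne comb_end_le unfolding at_comb_def L_def prefix_end_def by simp
qed

definition settled :: "nat list list \<Rightarrow> nat \<Rightarrow> nat \<Rightarrow> nat set \<Rightarrow> bool" where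
  "settled L c x V \<longleftrightarrow> (\<forall>c'. x \<le> c' \<and> c' < c \<longrightarrow> slice c' \<subseteq> set L) \<and> (\<kappa> = 0 \<longrightarrow> slice c \<subseteq> set L) \<and>
     (\<forall>c'. c < c' \<and> c' \<le> M \<longrightarrow> (c' \<in> V \<longrightarrow> slice c' \<subseteq> set L) \<and> (c' \<notin> V \<longrightarrow> slice c' \<inter> set L = {}))"

lemma settledD:
  assumes "settled L c x V"
  shows "x \<le> c' \<Longrightarrow> c' < c \<Longrightarrow> slice c' \<subseteq> set L" "\<kappa> = 0 \<Longrightarrow> slice c \<subseteq> set L"
    and "c < c' \<Longrightarrow> c' \<le> M \<Longrightarrow> c' \<in> V \<Longrightarrow> slice c' \<subseteq> set L"
    and "c < c' \<Longrightarrow> c' \<le> M \<Longrightarrow> c' \<notin> V \<Longrightarrow> slice c' \<inter> set L = {}"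
  using assms unfolding settled_def by auto

lemma settled_UN_subset:
  assumes "settled L c x V" "D \<subseteq> {c<..M} \<inter> V"
  shows "(\<Union>c'\<in>D. slice c') \<subseteq> set L"
proof (rule UN_least)
  fix c' assume "c' \<in> D"
  then have "c < c'" "c' \<le> M" "c' \<in> V" using assms(2) by auto
  then show "slice c' \<subseteq> set L" by (rule settledD(3)[OF assms(1)])
qed

lemma settledI:
  assumes "\<And>c'. x \<le> c' \<Longrightarrow> c' < c \<Longrightarrow> slice c' \<subseteq> set L" "\<kappa> = 0 \<Longrightarrow> slice c \<subseteq> set L"
    and "\<And>c'. c < c' \<Longrightarrow> c' \<le> M \<Longrightarrow> c' \<in> V \<Longrightarrow> slice c' \<subseteq> set L"
    and "\<And>c'. c < c' \<Longrightarrow> c' \<le> M \<Longrightarrow> c' \<notin> V \<Longrightarrow> slice c' \<inter> set L = {}"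
  shows "settled L c x V"
  using assms unfolding settled_def by blast

lemma targets_settled:
  assumes "at_comb L c x" "settled L c x V"
  shows "targets L c x = {c'. c < c' \<and> c' \<le> M \<and> c' \<notin> V}"
proof (intro set_eqI iffI)
  fix c' assume "c' \<in> targets L c x"
  then have c': "x \<le> c'" "c' \<le> M" "c' \<noteq> c" "comb_word c' x \<notin> set L" unfolding targets_def by auto
  then have "comb_word c' x \<in> slice c'" using comb_word_in_slice by blast
  then show "c' \<in> {c'. c < c' \<and> c' \<le> M \<and> c' \<notin> V}"
    using assms(2) c' unfolding settled_def by (metis (mono_tags) mem_Collect_eq subsetD linorder_neqE_nat)
next
  fix c' assume "c' \<in> {c'. c < c' \<and> c' \<le> M \<and> c' \<notin> V}"
  moreover have "x \<le> c'" using assms(1) calculation unfolding at_comb_def by simp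
  ultimately show "c' \<in> targets L c x"
    using comb_word_in_slice[of x c'] assms(2) unfolding targets_def settled_def by fastforce
qed

lemma jump_to_slice:
  assumes at: "at_comb L c x" and ne: "targets L c x \<noteq> {}" and H: "set L \<inter> slice t = {}"
    and t: "t = Min (targets L c x)"
  defines "L' \<equiv> L @ map (\<lambda>v. v @ tail t) (greedy (Pre t) (word_of_set (pos t) (comb x \<kappa>)))"
  shows "reaches S L L'" "set L' = set L \<union> slice t" "at_comb L' t (prefix_end x t)"
proof -
  have "finite (targets L c x)" unfolding targets_def by simp
  then have "t \<in> targets L c x" using Min_in ne t by blast
  then have xt: "x \<le> t" "t \<le> M" unfolding targets_def by auto
  have step: "greedy_step S L = L @ [comb_word t x]"
    using greedy_step_at_comb_word(2) at ne t unfolding at_comb_def by blast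
  note run = run_slice_from_comb[OF xt(2,1) H, folded L'_def]
  show "reaches S L L'" using reaches_trans[OF reaches_step[OF step] run(1)] .
  show "set L' = set L \<union> slice t" "at_comb L' t (prefix_end x t)" using run(2,3) .
qed

lemma ascend_step:
  assumes at: "at_comb L c x" and st: "settled L c x V" and ne: "targets L c x \<noteq> {}"
  defines "t \<equiv> Min (targets L c x)"
  defines "L' \<equiv> L @ map (\<lambda>v. v @ tail t) (greedy (Pre t) (word_of_set (pos t) (comb x \<kappa>)))"
  shows "c < t" "t \<le> M" "t \<notin> V" "{c<..<t} \<subseteq> V"
    and "reaches S L L'" "set L' = set L \<union> slice t"
    and "at_comb L' t (if \<kappa> = 0 then 0 else t)" "settled L' t (if \<kappa> = 0 then 0 else t) V"
    and "last L' = word_of_set m (comb t (Suc \<kappa>))"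
proof -
  have T: "targets L c x = {c'. c < c' \<and> c' \<le> M \<and> c' \<notin> V}" using targets_settled[OF at st] .
  have fin: "finite (targets L c x)" unfolding targets_def by simp
  show t: "c < t" "t \<le> M" "t \<notin> V" using Min_in[OF fin ne] unfolding T t_def by auto
  have below: "c' \<in> V" if "c < c'" "c' < t" for c'
    using Min_le[OF fin, of c'] that t unfolding T t_def by fastforce
  then show "{c<..<t} \<subseteq> V" by auto
  have x: "x \<le> c" "\<kappa> = 0 \<longrightarrow> x = 0" using at unfolding at_comb_def by auto
  have H: "set L \<inter> slice t = {}" using settledD(4)[OF st t(1,2,3)] by blast
  note jump = jump_to_slice[OF at ne H t_def[THEN meta_eq_to_obj_eq], folded L'_def]
  show "reaches S L L'" "set L' = set L \<union> slice t" using jump(1,2) .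
  have "prefix_end x t = (if \<kappa> = 0 then 0 else t)"
    using t x unfolding prefix_end_def comb_end_def by simp
  then show at: "at_comb L' t (if \<kappa> = 0 then 0 else t)" using jump(3) by simp
  have "comb_word t (if \<kappa> = 0 then 0 else t) = word_of_set m (comb t (Suc \<kappa>))"
    using comb_word_kappa_0[of t 0 t] comb_word_diag by (cases "\<kappa> = 0") simp_all
  then show "last L' = word_of_set m (comb t (Suc \<kappa>))" using at unfolding at_comb_def by simp
  show "settled L' t (if \<kappa> = 0 then 0 else t) V"
  proof (rule settledI)
    fix c' assume c': "(if \<kappa> = 0 then 0 else t) \<le> c'" "c' < t"
    then have "\<kappa> = 0" by (auto split: if_splits)
    consider "c' < c" | "c' = c" | "c < c'" by linarith
    then have "slice c' \<subseteq> set L"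
    proof cases
      case 3 then show ?thesis using settledD(3)[OF st] below c' t by simp
    qed (use settledD(1,2)[OF st] x \<open>\<kappa> = 0\<close> in auto)
    then show "slice c' \<subseteq> set L'" using jump(2) by auto
  next
    show "slice t \<subseteq> set L'" using jump(2) by auto
  next
    fix c' assume c': "t < c'" "c' \<le> M"
    then have "c < c'" using t by simp
    moreover have "slice c' \<inter> slice t = {}" using slice_disjoint c' t by simp
    ultimately show "c' \<in> V \<Longrightarrow> slice c' \<subseteq> set L'" "c' \<notin> V \<Longrightarrow> slice c' \<inter> set L' = {}"
      using settledD(3,4)[OF st _ c'(2)] jump(2) by auto
  qed
qed

lemma Max_diff_insert:
  assumes "c < t" "t \<le> M" "t \<notin> V" "{c<..<t} \<subseteq> V"
  shows "Max ({c<..M::nat} - V) = (if {t<..M} \<subseteq> V then t else Max ({t<..M} - V))"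
proof -
  have eq: "{c<..M} - V = insert t ({t<..M} - V)"
  proof (intro set_eqI iffI)
    fix y assume y: "y \<in> {c<..M} - V"
    then have "\<not> y < t" using assms(4) by auto
    then show "y \<in> insert t ({t<..M} - V)" using y by auto
  qed (use assms in auto)
  show ?thesis
  proof (cases "{t<..M} \<subseteq> V")
    case False
    then have ne: "{t<..M} - V \<noteq> {}" by auto
    then have "t < Max ({t<..M} - V)" using Max_in[of "{t<..M} - V"] by auto
    with ne show ?thesis unfolding eq using False by (simp add: Max_insert)
  next
    case True
    then have "{t<..M} - V = {}" by auto
    then show ?thesis unfolding eq using True by (simp only:) simp
  qed
qed

lemma UN_greaterThanAtMost_split:
  "c < t \<Longrightarrow> t \<le> M \<Longrightarrow> (\<Union>c'\<in>{c<..M::nat}. f c') = (\<Union>c'\<in>{c<..<t}. f c') \<union> f t \<union> (\<Union>c'\<in>{t<..M}. f c')"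
proof -
  assume "c < t" "t \<le> M"
  then have "{c<..M} = {c<..<t} \<union> {t} \<union> {t<..M}" by auto
  then show ?thesis by (simp only: UN_Un) simp
qed

lemma ascend:
  assumes "at_comb L c x" "settled L c x V"
  shows "\<exists>L'. reaches S L L' \<and> cands S L' = {} \<and> set L' = set L \<union> (\<Union>c'\<in>{c<..M}. slice c') \<and>
    last L' = (if {c<..M} \<subseteq> V then last L else word_of_set m (comb (Max ({c<..M} - V)) (Suc \<kappa>)))"
  using assms
proof (induction "M - c" arbitrary: c x L rule: less_induct)
  case less
  show ?case
  proof (cases "targets L c x = {}")
    case True
    then have "cands S L = {}"
      using greedy_step_at_comb_word(1) less.prems greedy_step_fixed_iff unfolding at_comb_def by blast
    moreover have V: "{c<..M} \<subseteq> V" using True targets_settled[OF less.prems] by auto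
    moreover have "(\<Union>c'\<in>{c<..M}. slice c') \<subseteq> set L"
      using settled_UN_subset[OF less.prems(2)] V by simp
    ultimately show ?thesis using reaches_refl by (intro exI[of _ L]) auto
  next
    case False
    define t where "t = Min (targets L c x)"
    note step = ascend_step[OF less.prems False, folded t_def]
    let ?L2 = "L @ map (\<lambda>v. v @ tail t) (greedy (Pre t) (word_of_set (pos t) (comb x \<kappa>)))"
    have "M - t < M - c" using step(1,2) by simp
    from less.hyps[OF this step(7,8)] obtain L' where L': "reaches S ?L2 L'" "cands S L' = {}"
      "set L' = set ?L2 \<union> (\<Union>c'\<in>{t<..M}. slice c')"
      "last L' = (if {t<..M} \<subseteq> V then last ?L2 else word_of_set m (comb (Max ({t<..M} - V)) (Suc \<kappa>)))"
      by blast
    have "last L' = word_of_set m (comb (Max ({c<..M} - V)) (Suc \<kappa>))"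
      unfolding L'(4) Max_diff_insert[OF step(1-4)] step(9) by (rule if_distrib[symmetric])
    moreover have "\<not> {c<..M} \<subseteq> V" using step(1-3) by auto
    moreover have "{c<..<t} \<subseteq> {c<..M} \<inter> V" using step(2,4) by auto
    then have "(\<Union>c'\<in>{c<..<t}. slice c') \<subseteq> set L" by (rule settled_UN_subset[OF less.prems(2)])
    then have "set L' = set L \<union> (\<Union>c'\<in>{c<..M}. slice c')"
      unfolding L'(3) step(6) UN_greaterThanAtMost_split[OF step(1,2)] by auto
    ultimately show ?thesis using reaches_trans[OF step(5) L'(1)] L'(2) by (intro exI[of _ L']) simp
  qed
qed

lemma Min_targets_eqI:
  "t \<in> targets L c x \<Longrightarrow> (\<And>c'. c' \<in> targets L c x \<Longrightarrow> t \<le> c') \<Longrightarrow> Min (targets L c x) = t"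
  by (rule Min_eqI) (auto simp: targets_def)

text \<open>For odd \<open>\<kappa>\<close> the slices below \<open>c\<close> are run through in decreasing order, since each of
  them ends at the comb starting one step further left.\<close>
lemma descend:
  assumes "odd \<kappa>" "0 < c" "at_comb L c (c - 1)" "\<forall>c'<c. slice c' \<inter> set L = {}"
  shows "\<exists>L'. reaches S L L' \<and> at_comb L' 0 0 \<and> set L' = set L \<union> (\<Union>c'<c. slice c')"
  using assms(2-)
proof (induction c arbitrary: L)
  case (Suc c0)
  have c0M: "c0 \<le> M" using Suc.prems(2) unfolding at_comb_def by simp
  have H: "set L \<inter> slice c0 = {}" using Suc.prems(3) by (simp add: Int_commute)
  have "comb_word c0 c0 \<notin> set L" using H comb_word_in_slice[OF le_refl c0M] by blast
  then have "c0 \<in> targets L (Suc c0) c0" using c0M unfolding targets_def by simp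
  moreover have "Min (targets L (Suc c0) c0) = c0"
    using calculation by (rule Min_targets_eqI) (simp add: targets_def)
  ultimately obtain L2 where L2: "reaches S L L2" "set L2 = set L \<union> slice c0"
    "at_comb L2 c0 (prefix_end c0 c0)"
    using jump_to_slice[OF _ _ H] Suc.prems(2) by (metis diff_Suc_1 empty_iff)
  have pe: "prefix_end c0 c0 = c0 - 1"
    using assms(1) unfolding prefix_end_def comb_end_def by (cases c0) auto
  show ?case
  proof (cases "c0 = 0")
    case True
    then show ?thesis using L2 pe by (intro exI[of _ L2]) auto
  next
    case False
    have "slice c' \<inter> set L2 = {}" if "c' < c0" for c'
    proof -
      have "slice c' \<inter> set L = {}" "slice c' \<inter> slice c0 = {}"
        using Suc.prems(3) slice_disjoint c0M that by auto
      then show ?thesis unfolding L2(2) by blast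
    qed
    then obtain L' where "reaches S L2 L'" "at_comb L' 0 0" "set L' = set L2 \<union> (\<Union>c'<c0. slice c')"
      using Suc.IH[of L2] False L2(3) pe by auto
    moreover have "set L2 \<union> (\<Union>c'<c0. slice c') = set L \<union> (\<Union>c'<Suc c0. slice c')"
      using L2(2) by (auto simp: lessThan_Suc)
    ultimately show ?thesis using reaches_trans[OF L2(1)] by metis
  qed
qed simp

lemma start_at_comb:
  assumes i: "i \<le> M"
  defines "L \<equiv> map (\<lambda>v. v @ tail i) (greedy (Pre i) (word_of_set (pos i) (comb i \<kappa>)))"
  shows "reaches S [word_of_set m (comb i (Suc \<kappa>))] L" "set L = slice i"
    and "at_comb L i (prefix_end i i)"
  using run_slice_from_comb[OF i le_refl, of "[]"] comb_word_diag unfolding L_def by auto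

lemma Un_slices_eq_S:
  assumes "slice 0 \<subseteq> X" "X \<subseteq> S"
  shows "X \<union> (\<Union>c\<in>{0<..M}. slice c) = S"
proof
  show "X \<union> (\<Union>c\<in>{0<..M}. slice c) \<subseteq> S"
    using assms(2) slice_subset by (intro Un_least UN_least) auto
  show "S \<subseteq> X \<union> (\<Union>c\<in>{0<..M}. slice c)"
  proof
    fix w assume "w \<in> S"
    then obtain c where "c \<le> M" "w \<in> slice c" using S_eq_Union_slice by blast
    then show "w \<in> X \<union> (\<Union>c\<in>{0<..M}. slice c)" using assms(1) by (cases "c = 0") auto
  qed
qed

lemma Max_greaterThanAtMost_diff: "c < M \<Longrightarrow> M \<notin> V \<Longrightarrow> Max ({c<..M::nat} - V) = M"
  by (rule Max_eqI) auto

text \<open>Index of the slice where the final ascent from slice 0 stops, when the slices with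
  index in \<open>V\<close> are already visited.\<close>
definition ascent_end :: "nat set \<Rightarrow> nat" where
  "ascent_end V = (if {0<..M} \<subseteq> V then 0 else Max ({0<..M} - V))"

lemma ascent_end_eqI:
  assumes "0 < c" "c \<le> M" "c \<notin> V" "{c<..M} \<subseteq> V"
  shows "ascent_end V = c"
proof -
  have "c \<in> {0<..M}" using assms(1,2) by simp
  then have "\<not> {0<..M} \<subseteq> V" using assms(3) by blast
  moreover have "Max ({0<..M} - V) = c"
  proof (rule Max_eqI)
    fix y assume "y \<in> {0<..M} - V"
    then show "y \<le> c" using assms(4) by (meson DiffE greaterThanAtMost_iff not_le subsetD)
  qed (use assms in auto)
  ultimately show ?thesis unfolding ascent_end_def by simp
qed

lemma ascent_end_0: "{0<..M} \<subseteq> V \<Longrightarrow> ascent_end V = 0"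
  unfolding ascent_end_def by simp

lemma settled_Union:
  assumes "set L = (\<Union>c\<in>D. slice c)" "D \<subseteq> {..M}" "0 \<in> D"
  shows "settled L 0 0 D"
proof (rule settledI)
  show "slice c' \<inter> set L = {}" if "0 < c'" "c' \<le> M" "c' \<notin> D" for c'
  proof -
    have "slice c' \<inter> slice d = {}" if "d \<in> D" for d
      using slice_disjoint \<open>c' \<le> M\<close> \<open>c' \<notin> D\<close> assms(2) that by blast
    then show ?thesis unfolding assms(1) Int_UN_distrib by simp
  qed
qed (use assms in auto)

lemma ascend_from_0:
  assumes "at_comb L 0 0" "settled L 0 0 V" "slice 0 \<subseteq> set L" "set L \<subseteq> S"
  shows "\<exists>L'. reaches S L L' \<and> cands S L' = {} \<and> set L' = S \<and>
    last L' = word_of_set m (comb (ascent_end V) (Suc \<kappa>))"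
proof -
  obtain L' where L': "reaches S L L'" "cands S L' = {}" "set L' = set L \<union> (\<Union>c\<in>{0<..M}. slice c)"
    "last L' = (if {0<..M} \<subseteq> V then last L else word_of_set m (comb (Max ({0<..M} - V)) (Suc \<kappa>)))"
    using ascend[OF assms(1,2)] by blast
  have "last L = word_of_set m (comb 0 (Suc \<kappa>))"
    using assms(1) comb_word_diag unfolding at_comb_def by simp
  then have "last L' = word_of_set m (comb (ascent_end V) (Suc \<kappa>))"
    unfolding L'(4) ascent_end_def by simp
  moreover have "set L' = S" unfolding L'(3) using assms(3,4) by (rule Un_slices_eq_S)
  ultimately show ?thesis using L'(1,2) by blast
qed

lemma reaches_from_comb_0:
  shows "\<exists>L'. reaches S [word_of_set m (comb 0 (Suc \<kappa>))] L' \<and> cands S L' = {} \<and> set L' = S \<and>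
    last L' = word_of_set m (comb (comb_end (Suc \<kappa>) 0 M) (Suc \<kappa>))"
proof -
  define L1 where "L1 = map (\<lambda>v. v @ tail 0) (greedy (Pre 0) (word_of_set (pos 0) (comb 0 \<kappa>)))"
  note L1 = start_at_comb[OF le0, folded L1_def]
  have "prefix_end 0 0 = 0" unfolding prefix_end_def comb_end_def by simp
  then have at: "at_comb L1 0 0" using L1(3) by simp
  have st: "settled L1 0 0 {0}" using settled_Union[of L1 "{0}"] L1(2) by simp
  have ce: "comb_end (Suc \<kappa>) 0 M = ascent_end {0}"
    using ascent_end_eqI[of M "{0}"] ascent_end_0[of "{0}"] unfolding comb_end_def by auto
  have "slice 0 \<subseteq> set L1" "set L1 \<subseteq> S" using L1(2) slice_subset by auto
  then obtain L' where "reaches S L1 L'" "cands S L' = {}" "set L' = S"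
    "last L' = word_of_set m (comb (comb_end (Suc \<kappa>) 0 M) (Suc \<kappa>))"
    using ascend_from_0[OF at st] ce by auto
  then show ?thesis using reaches_trans[OF L1(1)] by blast
qed

lemma reaches_from_comb_odd_pos:
  assumes "odd \<kappa>" "0 < i" "i \<le> M"
  shows "\<exists>L'. reaches S [word_of_set m (comb i (Suc \<kappa>))] L' \<and> cands S L' = {} \<and> set L' = S \<and>
    last L' = word_of_set m (comb (comb_end (Suc \<kappa>) i M) (Suc \<kappa>))"
proof -
  define L1 where "L1 = map (\<lambda>v. v @ tail i) (greedy (Pre i) (word_of_set (pos i) (comb i \<kappa>)))"
  note L1 = start_at_comb[OF assms(3), folded L1_def]
  have "prefix_end i i = i - 1" using assms(1,2) unfolding prefix_end_def comb_end_def by auto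
  then have "at_comb L1 i (i - 1)" using L1(3) by simp
  moreover have "\<forall>c'<i. slice c' \<inter> set L1 = {}"
    using L1(2) slice_disjoint assms(3) by auto
  ultimately obtain L2 where L2: "reaches S L1 L2" "at_comb L2 0 0"
    "set L2 = slice i \<union> (\<Union>c'<i. slice c')"
    using descend[OF assms(1,2)] L1(2) by metis
  have "{..i} = insert i {..<i}" by auto
  then have L2': "set L2 = (\<Union>c\<in>{..i}. slice c)" unfolding L2(3) by simp
  have st: "settled L2 0 0 {..i}" using settled_Union[OF L2'] assms(3) by simp
  have sub: "slice 0 \<subseteq> set L2" unfolding L2(3) using assms(2) by blast
  have "set L2 \<subseteq> S"
    unfolding L2(3) using slice_subset assms(3) by (intro Un_least UN_least) auto
  note ascent = ascend_from_0[OF L2(2) st sub this]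
  have "comb_end (Suc \<kappa>) i M = ascent_end {..i}"
  proof (cases "i < M")
    case True
    then show ?thesis using ascent_end_eqI[of M "{..i}"] unfolding comb_end_def by auto
  next
    case False
    then have "{0<..M} \<subseteq> {..i}" by auto
    then show ?thesis using ascent_end_0 False assms(1) unfolding comb_end_def by simp
  qed
  then obtain L' where "reaches S L2 L'" "cands S L' = {}" "set L' = S"
    "last L' = word_of_set m (comb (comb_end (Suc \<kappa>) i M) (Suc \<kappa>))"
    using ascent by auto
  then show ?thesis using reaches_trans[OF L1(1) reaches_trans[OF L2(1)]] by blast
qed

text \<open>For even \<open>\<kappa>\<close> the run through slice \<open>i\<close> ends at the comb starting at 0, so the last 1
  jumps to slice 0 first and then climbs through the remaining slices.\<close>
lemma reaches_from_comb_even_pos: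
  assumes "even \<kappa>" "0 < i" "i \<le> M"
  shows "\<exists>L'. reaches S [word_of_set m (comb i (Suc \<kappa>))] L' \<and> cands S L' = {} \<and> set L' = S \<and>
    last L' = word_of_set m (comb (comb_end (Suc \<kappa>) i M) (Suc \<kappa>))"
proof -
  define L1 where "L1 = map (\<lambda>v. v @ tail i) (greedy (Pre i) (word_of_set (pos i) (comb i \<kappa>)))"
  note L1 = start_at_comb[OF assms(3), folded L1_def]
  have "prefix_end i i = 0" using assms(1) unfolding prefix_end_def comb_end_def by simp
  then have at1: "at_comb L1 i 0" using L1(3) by simp
  have H: "set L1 \<inter> slice 0 = {}" using L1(2) slice_disjoint assms(2,3) by simp
  then have "comb_word 0 0 \<notin> set L1" using comb_word_in_slice[of 0 0] by blast
  then have "0 \<in> targets L1 i 0" using assms(2,3) unfolding targets_def by simp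
  moreover from this have "Min (targets L1 i 0) = 0" by (rule Min_targets_eqI) simp
  ultimately obtain L2 where L2: "reaches S L1 L2" "set L2 = slice i \<union> slice 0"
    "at_comb L2 0 (prefix_end 0 0)"
    using jump_to_slice[OF at1 _ H] L1(2) by (metis empty_iff)
  have "prefix_end 0 0 = 0" unfolding prefix_end_def comb_end_def by simp
  then have at2: "at_comb L2 0 0" using L2(3) by simp
  have st: "settled L2 0 0 {0, i}" using settled_Union[of L2 "{0, i}"] L2(2) assms(3) by auto
  have "slice 0 \<subseteq> set L2" "set L2 \<subseteq> S" unfolding L2(2) using slice_subset assms(3) by auto
  note ascent = ascend_from_0[OF at2 st this]
  have "comb_end (Suc \<kappa>) i M = ascent_end {0, i}"
  proof -
    consider "i < M" | "i = M" "M = 1" | "i = M" "2 \<le> M" using assms(2,3) by linarith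
    then show ?thesis
    proof cases
      case 1
      then show ?thesis using ascent_end_eqI[of M "{0, i}"] unfolding comb_end_def by auto
    next
      case 2
      then have "{0<..M} \<subseteq> {0, i}" by auto
      then show ?thesis using ascent_end_0 2 assms(1) unfolding comb_end_def by simp
    next
      case 3
      then have "{M - 1<..M} \<subseteq> {0, i}" by auto
      then show ?thesis using ascent_end_eqI[of "M - 1" "{0, i}"] 3 assms(1) unfolding comb_end_def by simp
    qed
  qed
  then obtain L' where "reaches S L2 L'" "cands S L' = {}" "set L' = S"
    "last L' = word_of_set m (comb (comb_end (Suc \<kappa>) i M) (Suc \<kappa>))"
    using ascent by auto
  then show ?thesis using reaches_trans[OF L1(1) reaches_trans[OF L2(1)]] by blast
qed

lemma greedy_from_comb:
  assumes "i \<le> M"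
  shows "set (greedy S (word_of_set m (comb i (Suc \<kappa>)))) = S"
    and "last (greedy S (word_of_set m (comb i (Suc \<kappa>)))) = word_of_set m (comb (comb_end (Suc \<kappa>) i M) (Suc \<kappa>))"
proof -
  have a: "word_of_set m (comb i (Suc \<kappa>)) \<in> S"
    using comb_word_in_slice[OF le_refl assms] slice_subset[OF assms] comb_word_diag by auto
  have "\<exists>L'. reaches S [word_of_set m (comb i (Suc \<kappa>))] L' \<and> cands S L' = {} \<and> set L' = S \<and>
    last L' = word_of_set m (comb (comb_end (Suc \<kappa>) i M) (Suc \<kappa>))"
    using reaches_from_comb_0 reaches_from_comb_odd_pos[OF _ _ assms] reaches_from_comb_even_pos[OF _ _ assms]
    by (cases "i = 0") auto
  then show "set (greedy S (word_of_set m (comb i (Suc \<kappa>)))) = S"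
    and "last (greedy S (word_of_set m (comb i (Suc \<kappa>)))) = word_of_set m (comb (comb_end (Suc \<kappa>) i M) (Suc \<kappa>))"
    using greedy_eqI[OF finite_S a] by metis+
qed

lemma greedy_Pre_from_non_comb:
  assumes c0: "c0 \<le> M" and B: "fib_set (pos c0) \<kappa> B" and nc: "B \<noteq> comb c0 \<kappa>"
  defines "G \<equiv> greedy (Pre c0) (word_of_set (pos c0) B)"
  shows "\<kappa> \<noteq> 0" and "last G = word_of_set (pos c0) (comb c0 \<kappa>)"
    and "c0 = 0 \<Longrightarrow> word_of_set (pos 0) (comb 0 \<kappa>) \<notin> set G"
proof -
  have Bs: "B \<subseteq> {..<pos c0}" using fib_set_subset[OF B] .
  have pc: "pos c0 - 2 * \<kappa> = c0" "2 * \<kappa> \<le> pos c0" unfolding pos_def by simp_all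
  have inFib: "word_of_set (pos c0) B \<in> Fib0 (pos c0) \<kappa>" using B Bs word_of_set_in_Fib0_iff by blast
  show "\<kappa> \<noteq> 0"
  proof
    assume k0: "\<kappa> = 0"
    then have "B = {}" using B fib_set_0_iff by simp
    then show False using nc k0 by simp
  qed
  have "last G = word_of_set (pos c0) (comb c0 \<kappa>) \<and> (c0 = 0 \<longrightarrow> word_of_set (pos 0) (comb 0 \<kappa>) \<notin> set G)"
  proof (cases "\<exists>y \<le> c0. B = comb y \<kappa>")
    case True
    then obtain y where y: "y < c0" "B = comb y \<kappa>" using nc le_neq_implies_less by blast
    then show ?thesis
      using comb_IH pc unfolding comb_start_property_def G_def Pre_def comb_end_def by auto
  next
    case False
    then show ?thesis
      using non_comb_IH Bs inFib pc unfolding non_comb_start_property_def G_def Pre_def by auto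
  qed
  then show "last G = word_of_set (pos c0) (comb c0 \<kappa>)"
    and "c0 = 0 \<Longrightarrow> word_of_set (pos 0) (comb 0 \<kappa>) \<notin> set G" by auto
qed

lemma run_non_comb_slice:
  assumes c0: "c0 \<le> M" and B: "fib_set (pos c0) \<kappa> B" and nc: "B \<noteq> comb c0 \<kappa>"
  obtains L where "reaches S [word_of_set m (insert (pos c0) B)] L" "at_comb L c0 c0" "set L \<subseteq> slice c0"
    and "word_of_set m (comb 0 (Suc \<kappa>)) \<notin> set L"
proof -
  have Bs: "B \<subseteq> {..<pos c0}" using fib_set_subset[OF B] .
  define G where "G = greedy (Pre c0) (word_of_set (pos c0) B)"
  note G = greedy_Pre_from_non_comb[OF c0 B nc, folded G_def]
  define L where "L = map (\<lambda>v. v @ tail c0) G"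
  have v0: "word_of_set (pos c0) B \<in> Pre c0" unfolding Pre_def using B Bs word_of_set_in_Fib0_iff by blast
  note run = run_slice[OF c0 v0, of "[]", simplified, folded G_def, folded L_def]
  have Gne: "G \<noteq> []" "set G \<subseteq> Pre c0" using greedy_nonempty_subset[OF finite_Pre v0] unfolding G_def by auto
  have "last L = comb_word c0 c0"
    using G(2) Gne comb_word_append_tail[OF le_refl c0] unfolding L_def by (simp add: last_map)
  then have "at_comb L c0 c0" using c0 Gne run(2) G(1) unfolding at_comb_def L_def by simp
  moreover have "reaches S [word_of_set m (insert (pos c0) B)] L"
    using run(1) word_of_set_append_tail_pos[OF c0 Bs] by simp
  moreover have L: "set L \<subseteq> slice c0" using Gne unfolding L_def slice_def by auto
  moreover have "word_of_set m (comb 0 (Suc \<kappa>)) \<notin> set L"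
  proof (cases "c0 = 0")
    case True
    have "word_of_set m (comb 0 (Suc \<kappa>)) = word_of_set (pos 0) (comb 0 \<kappa>) @ tail 0"
      using comb_word_diag comb_word_append_tail[of 0 0] by simp
    then show ?thesis using G(3) True unfolding L_def by auto
  next
    case False
    have "word_of_set m (comb 0 (Suc \<kappa>)) \<in> slice 0"
      using comb_word_diag comb_word_in_slice[of 0 0] by simp
    then show ?thesis using L False slice_disjoint[of 0 c0] c0 by auto
  qed
  ultimately show ?thesis using that by blast
qed

lemma greedy_from_non_comb:
  assumes A: "A \<subseteq> {..<m}" "word_of_set m A \<in> S" and nc: "\<forall>i \<le> M. A \<noteq> comb i (Suc \<kappa>)"
  shows "last (greedy S (word_of_set m A)) = word_of_set m (comb M (Suc \<kappa>))"
    and "word_of_set m (comb 0 (Suc \<kappa>)) \<notin> set (greedy S (word_of_set m A))"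
proof -
  obtain c0 where c0: "c0 \<le> M" "word_of_set m A \<in> slice c0" using A(2) S_eq_Union_slice by blast
  then obtain B where B: "fib_set (pos c0) \<kappa> B" "word_of_set m A = word_of_set m (insert (pos c0) B)"
    using slice_iff by blast
  have "insert (pos c0) B \<subseteq> {..<m}" using fib_set_subset[OF B(1)] Suc_pos_less[OF c0(1)] by auto
  then have AB: "A = insert (pos c0) B" using word_of_set_eq_iff A(1) B(2) by blast
  have ncB: "B \<noteq> comb c0 \<kappa>" using nc c0(1) unfolding AB comb_Suc pos_def by (auto simp: add.commute)
  then obtain L1 where L1: "reaches S [word_of_set m A] L1" "at_comb L1 c0 c0" "set L1 \<subseteq> slice c0"
    "word_of_set m (comb 0 (Suc \<kappa>)) \<notin> set L1"
    using run_non_comb_slice[OF c0(1) B(1)] AB by metis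
  have "settled L1 c0 c0 {}"
  proof (rule settledI)
    show "slice c' \<inter> set L1 = {}" if "c0 < c'" "c' \<le> M" for c'
      using slice_disjoint[of c' c0] that c0(1) L1(3) by auto
  qed (use greedy_Pre_from_non_comb(1)[OF c0(1) B(1) ncB] in auto)
  then obtain L' where L': "reaches S L1 L'" "cands S L' = {}"
    "set L' = set L1 \<union> (\<Union>c\<in>{c0<..M}. slice c)"
    "last L' = (if {c0<..M} \<subseteq> {} then last L1 else word_of_set m (comb (Max ({c0<..M} - {})) (Suc \<kappa>)))"
    using ascend[OF L1(2)] by blast
  have greedy: "greedy S (word_of_set m A) = L'"
    using greedy_eqI[OF finite_S A(2) reaches_trans[OF L1(1) L'(1)] L'(2)] .
  show "last (greedy S (word_of_set m A)) = word_of_set m (comb M (Suc \<kappa>))"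
  proof (cases "c0 < M")
    case True
    then have "\<not> {c0<..M} \<subseteq> {}" by auto
    then show ?thesis using greedy L'(4) Max_greaterThanAtMost_diff[OF True, of "{}"] by simp
  next
    case False
    then show ?thesis using greedy L'(4) L1(2) comb_word_diag c0(1) unfolding at_comb_def by simp
  qed
  have "word_of_set m (comb 0 (Suc \<kappa>)) \<in> slice 0"
    using comb_word_diag comb_word_in_slice[of 0 0] by simp
  then have "word_of_set m (comb 0 (Suc \<kappa>)) \<notin> slice c" if "0 < c" "c \<le> M" for c
    using slice_disjoint[of 0 c] that by auto
  then show "word_of_set m (comb 0 (Suc \<kappa>)) \<notin> set (greedy S (word_of_set m A))"
    unfolding greedy L'(3) using L1(4) by auto
qed

end

lemma slicing_IH_Suc:
  assumes "2 * Suc k \<le> m" "comb_start_property k" "non_comb_start_property k"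
  shows "slicing_IH k m"
  using assms by (simp add: slicing_IH_def slicing_IH_axioms_def slicing_def)

lemma greedy_Fib0_0: "greedy (Fib0 m 0) (word_of_set m {}) = [word_of_set m {}]"
proof (rule greedy_eqI[OF finite_Fib0 _ reaches_refl])
  show "word_of_set m {} \<in> Fib0 m 0" using Fib0_0 by simp
  show "cands (Fib0 m 0) [word_of_set m {}] = {}" unfolding cands_def using htrans_word_of_set by auto
qed

lemma comb_start_properties: "comb_start_property k \<and> non_comb_start_property k"
proof (induction k)
  case 0
  have "A = comb 0 0" if "A \<subseteq> {..<m}" "word_of_set m A \<in> Fib0 m 0" for A m
    using that Fib0_0 word_of_set_eq_iff[of A m "{}"] by simp
  then show ?case
    unfolding comb_start_property_def non_comb_start_property_def using greedy_Fib0_0 Fib0_0 by fastforce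
next
  case (Suc k)
  have "set (greedy (Fib0 m (Suc k)) (word_of_set m (comb i (Suc k)))) = Fib0 m (Suc k) \<and>
    last (greedy (Fib0 m (Suc k)) (word_of_set m (comb i (Suc k)))) =
      word_of_set m (comb (comb_end (Suc k) i (m - 2 * Suc k)) (Suc k))"
    if "2 * Suc k \<le> m" "i \<le> m - 2 * Suc k" for m i
  proof -
    interpret slicing_IH k m using slicing_IH_Suc that(1) Suc.IH by blast
    show ?thesis using greedy_from_comb that(2) unfolding S_def M_def by blast
  qed
  moreover have "last (greedy (Fib0 m (Suc k)) (word_of_set m A)) = word_of_set m (comb (m - 2 * Suc k) (Suc k)) \<and>
    word_of_set m (comb 0 (Suc k)) \<notin> set (greedy (Fib0 m (Suc k)) (word_of_set m A))"
    if "2 * Suc k \<le> m" "A \<subseteq> {..<m}" "word_of_set m A \<in> Fib0 m (Suc k)"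
      "\<forall>i \<le> m - 2 * Suc k. A \<noteq> comb i (Suc k)" for m A
  proof -
    interpret slicing_IH k m using slicing_IH_Suc that(1) Suc.IH by blast
    show ?thesis using greedy_from_non_comb that(2-4) unfolding S_def M_def by blast
  qed
  ultimately show ?case unfolding comb_start_property_def non_comb_start_property_def by blast
qed

lemma Fib_words_eq_image:
  "Fib_words n k = word_of_set n ` {A. A \<subseteq> {..<n} \<and> card A = k \<and> sparse A}"
proof (intro set_eqI iffI)
  fix v assume v: "v \<in> Fib_words n k"
  define A where "A = {i. i < n \<and> v ! i = 1}"
  have "v = word_of_set n A"
  proof (rule nth_equalityI)
    fix i assume "i < length v"
    then have "v ! i \<in> {0,1}" using v nth_mem unfolding Fib_words_def by blast
    then show "v ! i = word_of_set n A ! i" using \<open>i < length v\<close> v unfolding A_def Fib_words_def by auto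
  qed (use v in \<open>simp add: Fib_words_def\<close>)
  moreover have "card A = k"
  proof -
    have "length v = n" "weight v = k" using v unfolding Fib_words_def by simp_all
    then show ?thesis unfolding A_def weight_def length_filter_conv_card by simp
  qed
  moreover have "sparse A" using v unfolding sparse_def A_def Fib_words_def by auto
  ultimately show "v \<in> word_of_set n ` {A. A \<subseteq> {..<n} \<and> card A = k \<and> sparse A}"
    unfolding A_def by auto
next
  fix v assume "v \<in> word_of_set n ` {A. A \<subseteq> {..<n} \<and> card A = k \<and> sparse A}"
  then obtain A where A: "A \<subseteq> {..<n}" "v = word_of_set n A" "card A = k" "sparse A" by blast
  have "weight v = card {i. i < n \<and> i \<in> A}"
    unfolding weight_def length_filter_conv_card A(2)
    by (rule arg_cong[where f=card]) (auto split: if_splits)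
  also have "{i. i < n \<and> i \<in> A} = A" using A(1) by auto
  finally have "weight v = k" using A(3) by simp
  moreover have "set v \<subseteq> {0,1}" unfolding A(2) word_of_set_def by auto
  moreover have "\<forall>i. Suc i < n \<longrightarrow> \<not> (v ! i = 1 \<and> v ! Suc i = 1)"
    using A(4) unfolding A(2) sparse_def by (auto split: if_splits)
  ultimately show "v \<in> Fib_words n k" unfolding Fib_words_def using A(2) by simp
qed

lemma Fib0_Suc: "Fib0 (Suc n) k = (\<lambda>v. v @ [0]) ` Fib_words n k"
proof -
  have "fib_set (Suc n) k A \<longleftrightarrow> A \<subseteq> {..<n} \<and> card A = k \<and> sparse A" for A
    unfolding fib_set_def by auto
  then have "Fib0 (Suc n) k = (\<lambda>A. word_of_set n A @ [0]) ` {A. A \<subseteq> {..<n} \<and> card A = k \<and> sparse A}"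
    unfolding Fib0_def using word_of_set_snoc0 by (intro image_cong) auto
  then show ?thesis unfolding Fib_words_eq_image by (simp add: image_image)
qed

lemma snoc0_in_Fib0_iff: "v @ [0] \<in> Fib0 (Suc n) k \<longleftrightarrow> v \<in> Fib_words n k"
  unfolding Fib0_Suc by auto

lemma finite_Fib_words: "finite (Fib_words n k)"
  unfolding Fib_words_eq_image by simp

lemma prefix_simulation_snoc0: "prefix_simulation (Fib0 (Suc n) k) (Fib_words n k) n [0]"
proof
  show "v @ [0] \<in> Fib0 (Suc n) k \<longleftrightarrow> v \<in> Fib_words n k" for v by (rule snoc0_in_Fib0_iff)
  show "length v = n" if "v \<in> Fib_words n k" for v using that unfolding Fib_words_def by simp
next
  fix v p q assume v: "v \<in> Fib_words n k" and h: "htrans (v @ [0]) p q"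
    and sw: "swap_pos (v @ [0]) p q \<in> Fib0 (Suc n) k"
  have "length v = n" using v unfolding Fib_words_def by simp
  then have "q = n \<Longrightarrow> last (swap_pos (v @ [0]) p q) = 1"
    using h unfolding htrans_def swap_pos_def by (simp add: last_conv_nth nth_list_update)
  moreover have "last w = 0" if "w \<in> Fib0 (Suc n) k" for w using that unfolding Fib0_Suc by auto
  ultimately show "q < n" using h sw \<open>length v = n\<close> unfolding htrans_def by fastforce
qed

lemma greedy_snoc0:
  assumes a: "a \<in> Fib_words n k"
  shows "greedy (Fib0 (Suc n) k) (a @ [0]) = map (\<lambda>v. v @ [0]) (greedy (Fib_words n k) a)"
proof -
  interpret prefix_simulation "Fib0 (Suc n) k" "Fib_words n k" n "[0]" by (rule prefix_simulation_snoc0)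
  let ?G = "greedy (Fib_words n k) a"
  have G: "?G \<noteq> []" "set ?G \<subseteq> Fib_words n k" using greedy_nonempty_subset[OF finite_Fib_words a] by auto
  have "cands (Fib0 (Suc n) k) (map (\<lambda>v. v @ [0]) ?G) = {}"
  proof (rule equals0I)
    fix z assume z: "z \<in> cands (Fib0 (Suc n) k) (map (\<lambda>v. v @ [0]) ?G)"
    obtain p q where pq: "z = (p,q)" by (cases z)
    have "n \<le> p" using cands_append_tail_stuck[of "[]", OF _ G cands_greedy[OF finite_Fib_words a]] z pq
      by simp
    moreover have "htrans (last ?G @ [0]) p q" using z pq G unfolding cands_def by (simp add: last_map)
    moreover have "last ?G \<in> Fib_words n k" using G last_in_set by blast
    then have "length (last ?G) = n" unfolding Fib_words_def by simp
    ultimately show False unfolding htrans_def by (auto simp: nth_append)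
  qed
  then show ?thesis
    using greedy_eqI[OF finite_Fib0 _ _] reaches_append_tail[OF finite_Fib_words a, of "[]"]
      snoc0_in_Fib0_iff a by simp
qed

lemma Fib_words_covered_iff:
  assumes "a \<in> Fib_words n k"
  shows "Fib_words n k \<subseteq> set (greedy (Fib_words n k) a) \<longleftrightarrow>
         Fib0 (Suc n) k \<subseteq> set (greedy (Fib0 (Suc n) k) (a @ [0]))"
  unfolding greedy_snoc0[OF assms] set_map unfolding Fib0_Suc by (simp add: inj_image_subset_iff inj_def)

section \<open>The generators\<close>

lemma replicate_word_of_set_replicate: "B \<subseteq> {..<b} \<Longrightarrow>
   replicate a 0 @ word_of_set b B @ replicate c 0 = word_of_set (a + b + c) ((\<lambda>x. a + x) ` B)"
proof (rule nth_equalityI)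
  assume B: "B \<subseteq> {..<b}"
  fix j assume "j < length (replicate a 0 @ word_of_set b B @ replicate c 0)"
  then have j: "j < a + b + c" by simp
  have mem: "j \<in> (\<lambda>x. a + x) ` B \<longleftrightarrow> a \<le> j \<and> j - a \<in> B" by force
  show "(replicate a 0 @ word_of_set b B @ replicate c 0) ! j = word_of_set (a + b + c) ((\<lambda>x. a + x) ` B) ! j"
  proof (cases "j < a")
    case True then show ?thesis using j mem by (simp add: nth_append)
  next
    case False
    show ?thesis
    proof (cases "j < a + b")
      case True
      then have "j - a < b" using False by simp
      then show ?thesis using j mem False True by (simp add: nth_append)
    next
      case False2: False
      then have "j - a \<notin> B" using B by auto
      moreover have "b \<le> j - a" using False2 by simp
      ultimately show ?thesis using j mem False False2 by (simp add: nth_append)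
    qed
  qed
qed simp

lemma concat_zero_ones_eq_word_of_set: "[1] @ concat (replicate r [0,1]) = word_of_set (2*r + 1) (comb 0 (Suc r))"
proof (induction r)
  case 0 then show ?case by (simp add: comb_def word_of_set_def)
next
  case (Suc r)
  have "[1] @ concat (replicate (Suc r) [0,1]) = ([1] @ concat (replicate r [0,1])) @ [0,1]"
    by (simp add: replicate_append_same[symmetric])
  also have "\<dots> = word_of_set (2*r + 1) (comb 0 (Suc r)) @ [0,1]" using Suc.IH by simp
  also have "\<dots> = word_of_set (2 * Suc r + 1) (comb 0 (Suc (Suc r)))"
  proof (rule nth_equalityI)
    fix j assume "j < length (word_of_set (2*r + 1) (comb 0 (Suc r)) @ [0,1])"
    then have j: "j < 2*r + 3" by simp
    consider "j < 2*r+1" | "j = 2*r+1" | "j = 2*r + 2" using j by linarith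
    then show "(word_of_set (2*r + 1) (comb 0 (Suc r)) @ [0,1]) ! j = word_of_set (2 * Suc r + 1) (comb 0 (Suc (Suc r))) ! j"
      by cases (simp_all add: nth_append comb_iff)
  qed simp
  finally show ?case .
qed

lemma generator_snoc0:
  assumes k: "1 \<le> k" and i: "i \<le> n + 1 - 2*k" and nk: "2*k \<le> n + 1"
  shows "(replicate i 0 @ [1] @ concat (replicate (k - 1) [0, 1]) @ replicate (n + 1 - 2 * k - i) 0) @ [0]
         = word_of_set (Suc n) (comb i k)"
proof -
  obtain r where r: "k = Suc r" using k by (cases k) auto
  have sub: "comb 0 (Suc r) \<subseteq> {..<2*r+1}" using Suc_lt_comb by fastforce
  have "(replicate i 0 @ [1] @ concat (replicate (k - 1) [0, 1]) @ replicate (n + 1 - 2 * k - i) 0) @ [0]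
      = replicate i 0 @ ([1] @ concat (replicate r [0, 1])) @ replicate (Suc (n + 1 - 2 * k - i)) 0"
    using r by (simp add: replicate_append_same)
  also have "\<dots> = replicate i 0 @ word_of_set (2*r+1) (comb 0 (Suc r)) @ replicate (Suc (n + 1 - 2 * k - i)) 0"
    by (simp only: concat_zero_ones_eq_word_of_set)
  also have "\<dots> = word_of_set (i + (2*r+1) + Suc (n + 1 - 2 * k - i)) ((\<lambda>x. i + x) ` comb 0 (Suc r))"
    by (rule replicate_word_of_set_replicate[OF sub])
  also have "i + (2*r+1) + Suc (n + 1 - 2 * k - i) = Suc n" using r i nk by simp
  finally show ?thesis using image_shift_comb r by simp
qed

lemma comb_in_Fib0:
  assumes "i + 2 * k \<le> m"
  shows "word_of_set m (comb i k) \<in> Fib0 m k"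
proof -
  have "fib_set m k (comb i k)" using fib_set_comb assms by simp
  then show ?thesis using word_of_set_in_Fib0_iff fib_set_subset by blast
qed

text \<open>Only the generators make the greedy list cover everything: from any other word the greedy
  list never reaches the generator \<open>comb 0 k\<close>.\<close>
lemma in_GenF_iff:
  assumes a: "a \<in> Fib_words n k" and nk: "2 * k \<le> Suc n"
  shows "a \<in> GenF n k \<longleftrightarrow> (\<exists>i \<le> Suc n - 2 * k. a @ [0] = word_of_set (Suc n) (comb i k))"
proof -
  have aF: "a @ [0] \<in> Fib0 (Suc n) k" using a snoc0_in_Fib0_iff by blast
  then obtain A where A: "a @ [0] = word_of_set (Suc n) A" "fib_set (Suc n) k A" by (blast elim: Fib0E)
  have As: "A \<subseteq> {..<Suc n}" using fib_set_subset[OF A(2)] .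
  have cover: "a \<in> GenF n k \<longleftrightarrow> Fib0 (Suc n) k \<subseteq> set (greedy (Fib0 (Suc n) k) (a @ [0]))"
    unfolding GenF_def using Fib_words_covered_iff[OF a] a by simp
  have props: "comb_start_property k" "non_comb_start_property k" using comb_start_properties by auto
  show ?thesis
  proof (cases "\<exists>i \<le> Suc n - 2 * k. A = comb i k")
    case True
    then obtain i where i: "i \<le> Suc n - 2 * k" "A = comb i k" by blast
    then have "set (greedy (Fib0 (Suc n) k) (a @ [0])) = Fib0 (Suc n) k"
      using props(1) nk A(1) unfolding comb_start_property_def by simp
    then show ?thesis using cover i A(1) by auto
  next
    case False
    then have "word_of_set (Suc n) (comb 0 k) \<notin> set (greedy (Fib0 (Suc n) k) (a @ [0]))"
      using props(2) nk As aF A(1) unfolding non_comb_start_property_def by simp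
    moreover have "word_of_set (Suc n) (comb 0 k) \<in> Fib0 (Suc n) k" using comb_in_Fib0 nk by simp
    moreover have "A = comb i k" if "a @ [0] = word_of_set (Suc n) (comb i k)" "i \<le> Suc n - 2 * k" for i
    proof -
      have "fib_set (Suc n) k (comb i k)" using fib_set_comb[of i k "Suc n"] that(2) nk by simp
      then have "comb i k \<subseteq> {..<Suc n}" by (rule fib_set_subset)
      moreover have "word_of_set (Suc n) A = word_of_set (Suc n) (comb i k)" using A(1) that(1) by simp
      ultimately show ?thesis using word_of_set_eq_iff[OF As] by blast
    qed
    ultimately show ?thesis using cover False by blast
  qed
qed

lemma GenF_eq_image:
  assumes nk: "2 * k \<le> Suc n"
    and W: "\<And>i. i \<le> Suc n - 2 * k \<Longrightarrow> W i @ [0] = word_of_set (Suc n) (comb i k)"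
  shows "GenF n k = W ` {..Suc n - 2 * k}"
proof
  show "GenF n k \<subseteq> W ` {..Suc n - 2 * k}"
  proof
    fix a assume "a \<in> GenF n k"
    moreover then have "a \<in> Fib_words n k" unfolding GenF_def by simp
    ultimately obtain i where "i \<le> Suc n - 2 * k" "a @ [0] = W i @ [0]"
      using in_GenF_iff nk W by metis
    then show "a \<in> W ` {..Suc n - 2 * k}" by auto
  qed
next
  show "W ` {..Suc n - 2 * k} \<subseteq> GenF n k"
  proof
    fix a assume "a \<in> W ` {..Suc n - 2 * k}"
    then obtain i where i: "i \<le> Suc n - 2 * k" "a = W i" by auto
    then have "a @ [0] \<in> Fib0 (Suc n) k" using W comb_in_Fib0[of i k "Suc n"] nk by simp
    then show "a \<in> GenF n k" using in_GenF_iff[OF _ nk] W i snoc0_in_Fib0_iff by blast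
  qed
qed

lemma inj_on_generators:
  assumes "0 < k" "2 * k \<le> Suc n" and W: "\<And>i. i \<le> Suc n - 2 * k \<Longrightarrow> W i @ [0] = word_of_set (Suc n) (comb i k)"
  shows "inj_on W {..Suc n - 2 * k}"
proof (rule inj_onI)
  fix i j assume ij: "i \<in> {..Suc n - 2 * k}" "j \<in> {..Suc n - 2 * k}" "W i = W j"
  have "comb l k \<subseteq> {..<Suc n}" if "l \<le> Suc n - 2 * k" for l
    using fib_set_subset[OF fib_set_comb] that assms(2) by simp
  then have "comb i k \<subseteq> {..<Suc n}" "comb j k \<subseteq> {..<Suc n}" using ij(1,2) by simp_all
  moreover have "word_of_set (Suc n) (comb i k) = word_of_set (Suc n) (comb j k)"
    using W ij by (metis atMost_iff)
  ultimately have "comb i k = comb j k" using word_of_set_eq_iff by blast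
  then show "i = j" using comb_eq_iff assms(1) by blast
qed

theorem proposition1:
  fixes n k :: nat
  assumes "n \<ge> 1" and "k \<ge> 1" and "n \<ge> 2 * k - 1"
  shows "GenF n k = {replicate i 0 @ [1] @ concat (replicate (k - 1) [0, 1]) @ replicate (n + 1 - 2 * k - i) 0
                      | i. i \<le> n + 1 - 2 * k}
         \<and> card (GenF n k) = n + 2 - 2 * k"
proof -
  define W :: "nat \<Rightarrow> nat list" where
    "W i = replicate i 0 @ [1] @ concat (replicate (k - 1) [0, 1]) @ replicate (n + 1 - 2 * k - i) 0" for i
  have nk: "2 * k \<le> Suc n" using assms by simp
  have W: "W i @ [0] = word_of_set (Suc n) (comb i k)" if "i \<le> Suc n - 2 * k" for i
    using generator_snoc0[of k i n] assms(2) that nk unfolding W_def by simp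
  have "GenF n k = W ` {..Suc n - 2 * k}" using GenF_eq_image[OF nk W] .
  moreover have "card (W ` {..Suc n - 2 * k}) = n + 2 - 2 * k"
    using card_image[OF inj_on_generators[OF _ nk W]] assms(2) nk by simp
  moreover have "W ` {..Suc n - 2 * k} = {W i | i. i \<le> n + 1 - 2 * k}" by auto
  ultimately show ?thesis unfolding W_def by simp
qed

end
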